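(* Let $n,k$ be positive integers and $c_1,\dots,c_n$ non-negative integers with $n=c_1+2c_2+\cdots+nc_n$, and let $\mathbf c=(c_1,\dots,c_n)$. Then the coefficient of $\dfrac{t_1^{c_1}\cdots t_n^{c_n}}{c_1!\cdots c_n!}$ in \[ \exp\Big(\sum_{\ell\ge1}\sum_{g\in G_k(\ell)}(-1)^{\ell g+1}\frac{\ell^{g-1}}{g}t_\ell^{g}\Big) \] equals $\operatorname{re}_k(\mathbf c)-\operatorname{ro}_k(\mathbf c)$.
   Context: $G_k(\ell)=\{g\in\mathbb N:\gcd(g\ell,k)=g\}$. The cycle type of $\sigma\in S_n$ is $(c_1,\dots,c_n)$ where $c_i$ is the number of $i$-cycles (fixed points count as $1$-cycles). $\operatorname{re}_k(\mathbf c)$ (resp. $\operatorname{ro}_k(\mathbf c)$) denotes the number of even (resp. odd) permutations $\tau\in S_n$ with $\tau^k=\sigma$, for any fixed $\sigma\in S_n$ of cycle type $\mathbf c$. *)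

theory Defs
  imports "HOL-Analysis.Analysis" "HOL-Library.Poly_Mapping" "HOL-Combinatorics.Combinatorics"
begin

text \<open>Multivariate (polynomial truncations of) power series in the variables t_1, t_2, ...:
  a monomial is a finitely supported exponent vector finitely supported map (variable index to exponent).\<close>
type_synonym mpoly = "(nat \<Rightarrow>\<^sub>0 nat) \<Rightarrow>\<^sub>0 real"

definition Gk :: "nat \<Rightarrow> nat \<Rightarrow> nat set" where
  "Gk k l = {g. gcd (g * l) k = g}"

definition genF :: "nat \<Rightarrow> nat \<Rightarrow> mpoly" where
  "genF k N = (\<Sum>l\<in>{1..N}. \<Sum>g\<in>Gk k l.
      Poly_Mapping.single (Poly_Mapping.single l g)
        ((-1) ^ (l * g + 1) * real l ^ (g - 1) / real g))"

definition exp_coeff :: "mpoly \<Rightarrow> (nat \<Rightarrow>\<^sub>0 nat) \<Rightarrow> real" where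
  "exp_coeff F m = suminf (\<lambda>j. Poly_Mapping.lookup (F ^ j) m / fact j)"

definition cycle_count :: "(nat \<Rightarrow> nat) \<Rightarrow> nat set \<Rightarrow> nat \<Rightarrow> nat" where
  "cycle_count \<sigma> S i = card {C. \<exists>x\<in>S. C = orbit \<sigma> x \<and> card C = i}"

end

theory Submission
  imports Defs
begin

text \<open>
  Write \<open>a(c) = c\<^sub>1! \<cdots> c\<^sub>n! [t^c] exp F\<close> for the normalised coefficient. Applying the
  Euler operator \<open>t\<^sub>l \<partial>/\<partial>t\<^sub>l\<close> to \<open>exp F\<close> gives, whenever \<open>c\<^sub>l > 0\<close>, the recursion
  \<open>a(c) = \<Sum>g \<in> G\<^sub>k(l). ((c\<^sub>l - 1) choose (g - 1)) (-1)^(l g + 1) (g - 1)! l^(g - 1) a(c - g e\<^sub>l)\<close>.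

  The signed number of \<open>k\<close>-th roots of \<open>\<sigma>\<close> obeys the same recursion. Fix \<open>x\<close> on an
  \<open>l\<close>-cycle of \<open>\<sigma>\<close>. The \<open>k\<close>-th power of an \<open>m\<close>-cycle splits into \<open>gcd m k\<close> cycles of
  length \<open>m div gcd m k\<close>, so the cycle through \<open>x\<close> of a root \<open>\<tau>\<close> is the union of \<open>g\<close>
  \<open>l\<close>-cycles of \<open>\<sigma>\<close>, one of them containing \<open>x\<close>, with \<open>gcd (g l) k = g\<close>, i.e.
  \<open>g \<in> G\<^sub>k(l)\<close>. There are \<open>(c\<^sub>l - 1) choose (g - 1)\<close> such families of cycles; on the union of
  each there are \<open>(g - 1)! l^(g - 1)\<close> cyclic roots, all of sign \<open>(-1)^(l g + 1)\<close>; and the rest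
  of \<open>\<tau>\<close> is any \<open>k\<close>-th root of \<open>\<sigma>\<close> on the remaining points.
\<close>

abbreviation lookup :: "('a \<Rightarrow>\<^sub>0 'b::zero) \<Rightarrow> 'a \<Rightarrow> 'b" where
  "lookup \<equiv> Poly_Mapping.lookup"

abbreviation keys :: "('a \<Rightarrow>\<^sub>0 'b::zero) \<Rightarrow> 'a set" where
  "keys \<equiv> Poly_Mapping.keys"

abbreviation single :: "'a \<Rightarrow> 'b \<Rightarrow> ('a \<Rightarrow>\<^sub>0 'b::zero)" where
  "single \<equiv> Poly_Mapping.single"

section \<open>Coefficients of products and of the exponential\<close>

definition monom_dvd :: "('a \<Rightarrow>\<^sub>0 nat) \<Rightarrow> ('a \<Rightarrow>\<^sub>0 nat) \<Rightarrow> bool" where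
  "monom_dvd a m \<longleftrightarrow> (\<forall>i. lookup a i \<le> lookup m i)"

lemma eq_add_iff_monom_dvd: "m = a + q \<longleftrightarrow> monom_dvd a m \<and> q = m - a"
  for m a q :: "'a \<Rightarrow>\<^sub>0 nat"
  by (auto simp: monom_dvd_def lookup_add lookup_minus intro!: poly_mapping_eqI)

lemma monom_dvd_imp_eq_add: "monom_dvd a m \<Longrightarrow> m = a + (m - a)"
  by (simp add: eq_add_iff_monom_dvd)

lemma monom_dvd_single: "monom_dvd (single i g) m \<longleftrightarrow> g \<le> lookup m i"
  unfolding monom_dvd_def lookup_single when_def by (metis le0 order_refl)

lemma lookup_mult_monom_dvd:
  fixes P Q :: "('a \<Rightarrow>\<^sub>0 nat) \<Rightarrow>\<^sub>0 'b::semiring_0"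
  assumes "finite A" "keys P \<subseteq> A"
  shows "lookup (P * Q) m = (\<Sum>a\<in>A. lookup P a * (if monom_dvd a m then lookup Q (m - a) else 0))"
proof -
  have "(\<Sum>q. lookup Q q when m = a + q) = (if monom_dvd a m then lookup Q (m - a) else 0)" for a
    unfolding eq_add_iff_monom_dvd by (cases "monom_dvd a m") (simp_all add: when_def)
  then have "lookup (P * Q) m = (\<Sum>a. lookup P a * (if monom_dvd a m then lookup Q (m - a) else 0))"
    by (simp add: lookup_mult)
  also have "\<dots> = (\<Sum>a\<in>A. lookup P a * (if monom_dvd a m then lookup Q (m - a) else 0))"
  proof (rule Sum_any.expand_superset)
    show "{a. lookup P a * (if monom_dvd a m then lookup Q (m - a) else 0) \<noteq> 0} \<subseteq> A"
      using assms(2) by (auto simp: in_keys_iff dest!: mult_not_zero)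
  qed (rule assms(1))
  finally show ?thesis .
qed

lemma lookup_of_nat_mult: "lookup (of_nat n * P) m = of_nat n * lookup P m"
  for P :: "('a::comm_monoid_add \<Rightarrow>\<^sub>0 'b::semiring_1)"
  by (induction n) (simp_all add: lookup_add algebra_simps)

definition euler_op :: "'a \<Rightarrow> (('a \<Rightarrow>\<^sub>0 nat) \<Rightarrow>\<^sub>0 'b) \<Rightarrow> ('a \<Rightarrow>\<^sub>0 nat) \<Rightarrow>\<^sub>0 'b::semiring_1" where
  "euler_op i P = Poly_Mapping.mapp (\<lambda>a c. of_nat (lookup a i) * c) P"

lemma lookup_euler_op: "lookup (euler_op i P) a = of_nat (lookup a i) * lookup P a"
  by (cases "a \<in> keys P") (auto simp: euler_op_def lookup_mapp in_keys_iff)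

lemma keys_euler_op: "keys (euler_op i P) \<subseteq> keys P"
  by (simp add: euler_op_def keys_mapp_subset)

lemma euler_op_mult:
  fixes P Q :: "('a \<Rightarrow>\<^sub>0 nat) \<Rightarrow>\<^sub>0 'b::comm_semiring_1"
  shows "euler_op i (P * Q) = euler_op i P * Q + P * euler_op i Q"
proof (rule poly_mapping_eqI)
  fix m
  have term_eq:
    "of_nat (lookup m i) * (lookup P a * (if monom_dvd a m then lookup Q (m - a) else 0)) =
      lookup (euler_op i P) a * (if monom_dvd a m then lookup Q (m - a) else 0) +
      lookup P a * (if monom_dvd a m then lookup (euler_op i Q) (m - a) else 0)" for a
  proof (cases "monom_dvd a m")
    case True
    then have "lookup m i = lookup a i + lookup (m - a) i"
      by (auto simp: monom_dvd_def lookup_minus)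
    with True show ?thesis by (simp add: lookup_euler_op algebra_simps)
  qed simp
  show "lookup (euler_op i (P * Q)) m = lookup (euler_op i P * Q + P * euler_op i Q) m"
    unfolding lookup_add lookup_euler_op[of i "P * Q"]
      lookup_mult_monom_dvd[OF finite_keys order_refl, of P]
      lookup_mult_monom_dvd[OF finite_keys keys_euler_op, of i P]
    by (simp add: sum_distrib_left term_eq sum.distrib)
qed

lemma euler_op_power:
  fixes P :: "('a \<Rightarrow>\<^sub>0 nat) \<Rightarrow>\<^sub>0 'b::comm_semiring_1"
  shows "euler_op i (P ^ Suc j) = of_nat (Suc j) * (euler_op i P * P ^ j)"
proof (induction j)
  case (Suc j)
  have "euler_op i (P ^ Suc (Suc j)) = euler_op i P * P ^ Suc j + P * euler_op i (P ^ Suc j)"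
    by (subst power_Suc) (rule euler_op_mult)
  also have "\<dots> = of_nat (Suc (Suc j)) * (euler_op i P * P ^ Suc j)"
    by (simp only: Suc) (simp add: algebra_simps)
  finally show ?case .
qed simp

definition monom_degree :: "('a \<Rightarrow>\<^sub>0 nat) \<Rightarrow> nat" where
  "monom_degree m = (\<Sum>i\<in>keys m. lookup m i)"

lemma monom_degree_superset:
  "finite A \<Longrightarrow> keys m \<subseteq> A \<Longrightarrow> monom_degree m = (\<Sum>i\<in>A. lookup m i)"
  unfolding monom_degree_def by (rule sum.mono_neutral_left) (auto simp: in_keys_iff)

lemma monom_degree_add: "monom_degree (a + b) = monom_degree a + monom_degree b"
proof -
  let ?A = "keys a \<union> keys b"
  have "keys (a + b) \<subseteq> ?A" by (auto simp: in_keys_iff lookup_add)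
  then show ?thesis
    by (simp add: monom_degree_superset[of ?A] lookup_add sum.distrib)
qed

lemma monom_degree_pos:
  assumes "a \<noteq> 0"
  shows "0 < monom_degree a"
proof -
  obtain i where "i \<in> keys a" using assms by (metis ex_in_conv keys_eq_empty)
  then show ?thesis unfolding monom_degree_def by (intro sum_pos2[of _ i]) (auto simp: in_keys_iff)
qed

lemma lookup_power_eq_0:
  fixes F :: "('a \<Rightarrow>\<^sub>0 nat) \<Rightarrow>\<^sub>0 'b::semiring_1"
  assumes F0: "lookup F 0 = 0" and "monom_degree m < j"
  shows "lookup (F ^ j) m = 0"
  using assms(2)
proof (induction j arbitrary: m)
  case (Suc j)
  have "lookup F a * (if monom_dvd a m then lookup (F ^ j) (m - a) else 0) = 0"
    if "a \<in> keys F" for a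
  proof (cases "monom_dvd a m")
    case True
    have "a \<noteq> 0" using that F0 by (auto simp: in_keys_iff)
    moreover have "monom_degree m = monom_degree a + monom_degree (m - a)"
      by (subst monom_dvd_imp_eq_add[OF True]) (rule monom_degree_add)
    ultimately have "monom_degree (m - a) < j"
      using Suc.prems monom_degree_pos[of a] by linarith
    with True show ?thesis by (simp add: Suc.IH)
  qed simp
  then show ?case by (simp add: lookup_mult_monom_dvd[OF finite_keys order_refl])
qed simp

lemma exp_coeff_eq_sum:
  assumes F0: "lookup F 0 = 0" and "monom_degree m \<le> D"
  shows "exp_coeff F m = (\<Sum>j\<le>D. lookup (F ^ j) m / fact j)"
  unfolding exp_coeff_def
  by (rule suminf_finite) (use assms lookup_power_eq_0[OF F0] in auto)

lemma lookup_power_Suc_euler: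
  fixes P :: "('a \<Rightarrow>\<^sub>0 nat) \<Rightarrow>\<^sub>0 'b::comm_semiring_1"
  shows "of_nat (lookup m i) * lookup (P ^ Suc j) m =
    of_nat (Suc j) * lookup (euler_op i P * P ^ j) m"
  by (simp only: lookup_euler_op[symmetric] euler_op_power lookup_of_nat_mult)

text \<open>The Euler operator is a derivation, so it maps \<open>exp F\<close> to \<open>euler_op i F * exp F\<close>; on
  coefficients this is the following recursion.\<close>

lemma exp_coeff_euler_rec:
  assumes F0: "lookup F 0 = 0" and m: "0 < lookup m i" and A: "finite A" "keys F \<subseteq> A"
  shows "real (lookup m i) * exp_coeff F m =
    (\<Sum>a\<in>A. lookup (euler_op i F) a * (if monom_dvd a m then exp_coeff F (m - a) else 0))"
proof -
  define D where "D = monom_degree m"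
  have "m \<noteq> 0" using m by auto
  then obtain D' where D': "D = Suc D'"
    using monom_degree_pos D_def gr0_implies_Suc by blast
  have tail: "exp_coeff F (m - a) = (\<Sum>j<D. lookup (F ^ j) (m - a) / fact j)"
    if "monom_dvd a m" "lookup (euler_op i F) a \<noteq> 0" for a
  proof -
    have "a \<noteq> 0" using that(2) F0 by (auto simp: lookup_euler_op)
    moreover have "monom_degree m = monom_degree a + monom_degree (m - a)"
      by (subst monom_dvd_imp_eq_add[OF that(1)]) (rule monom_degree_add)
    ultimately have "monom_degree (m - a) \<le> D'"
      using monom_degree_pos[of a] D' D_def by linarith
    then show ?thesis by (simp add: exp_coeff_eq_sum[OF F0] D' lessThan_Suc_atMost)
  qed
  have "real (lookup m i) * exp_coeff F m = (\<Sum>j\<le>D. real (lookup m i) * lookup (F ^ j) m / fact j)"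
    by (simp add: exp_coeff_eq_sum[OF F0, of m D] D_def sum_distrib_left)
  also have "\<dots> = (\<Sum>j<D. real (lookup m i) * lookup (F ^ Suc j) m / fact (Suc j))"
    unfolding D' atMost_Suc_eq_insert_0 lessThan_Suc_atMost
    using \<open>m \<noteq> 0\<close> by (simp add: sum.reindex lookup_one)
  also have "\<dots> = (\<Sum>j<D. lookup (euler_op i F * F ^ j) m / fact j)"
    by (simp only: lookup_power_Suc_euler fact_Suc of_nat_mult mult_divide_mult_cancel_left_if)
      (simp del: of_nat_Suc)
  also have "\<dots> = (\<Sum>j<D. \<Sum>a\<in>A.
      lookup (euler_op i F) a * (if monom_dvd a m then lookup (F ^ j) (m - a) else 0) / fact j)"
    by (simp add: lookup_mult_monom_dvd[OF A(1) order_trans[OF keys_euler_op A(2)]]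
        sum_divide_distrib)
  also have "\<dots> = (\<Sum>a\<in>A. lookup (euler_op i F) a *
      (if monom_dvd a m then (\<Sum>j<D. lookup (F ^ j) (m - a) / fact j) else 0))"
    by (subst sum.swap) (auto intro!: sum.cong simp: sum_distrib_left)
  also have "\<dots> = (\<Sum>a\<in>A. lookup (euler_op i F) a *
      (if monom_dvd a m then exp_coeff F (m - a) else 0))"
    by (intro sum.cong refl) (use tail in \<open>fastforce simp del: mult_eq_0_iff\<close>)
  finally show ?thesis .
qed

section \<open>The exponent series\<close>

definition gen_weight :: "nat \<Rightarrow> nat \<Rightarrow> real" where
  "gen_weight l g = (-1) ^ (l * g + 1) * real l ^ (g - 1) / real g"

lemma Gk_dvd: "g \<in> Gk k l \<Longrightarrow> g dvd k"
  unfolding Gk_def using gcd_dvd2[of "g * l" k] by simp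

lemma Gk_pos: "0 < k \<Longrightarrow> g \<in> Gk k l \<Longrightarrow> 0 < g"
  unfolding Gk_def by (cases g) auto

lemma finite_Gk: "0 < k \<Longrightarrow> finite (Gk k l)"
  by (rule finite_subset[of _ "{..k}"]) (auto dest: Gk_dvd dvd_imp_le)

lemma lookup_genF:
  "lookup (genF k N) a = (\<Sum>l\<in>{1..N}. \<Sum>g\<in>Gk k l. if single l g = a then gen_weight l g else 0)"
  unfolding genF_def gen_weight_def lookup_sum lookup_single when_def by simp

lemma lookup_genF_0:
  assumes "0 < k"
  shows "lookup (genF k N) 0 = 0"
proof -
  have "single l g \<noteq> 0" if "g \<in> Gk k l" for l g
    using Gk_pos[OF assms that] by (metis lookup_single_eq lookup_zero less_irrefl)
  then show ?thesis unfolding lookup_genF by (auto intro!: sum.neutral)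
qed

lemma exp_coeff_genF_rec:
  assumes k: "0 < k" and l: "1 \<le> l" "l \<le> N" and m: "0 < lookup m l"
  shows "real (lookup m l) * exp_coeff (genF k N) m = (\<Sum>g\<in>Gk k l. real g * gen_weight l g *
    (if g \<le> lookup m l then exp_coeff (genF k N) (m - single l g) else 0))"
proof -
  define F where "F = genF k N"
  define A where "A = (\<Union>l'\<in>{1..N}. single l' ` Gk k l')"
  define f where "f a = (if monom_dvd a m then exp_coeff F (m - a) else 0)" for a
  have fin: "finite A" unfolding A_def using finite_Gk[OF k] by auto
  have "keys F \<subseteq> A"
  proof
    fix a assume "a \<in> keys F"
    then obtain l' g where "l' \<in> {1..N}" "g \<in> Gk k l'" "single l' g = a"
      unfolding F_def in_keys_iff lookup_genF
      by (elim sum.not_neutral_contains_not_neutral) (auto split: if_splits)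
    then show "a \<in> A" by (auto simp: A_def)
  qed
  then have "real (lookup m l) * exp_coeff F m = (\<Sum>a\<in>A. lookup (euler_op l F) a * f a)"
    unfolding f_def by (rule exp_coeff_euler_rec[OF lookup_genF_0[OF k, of N] m fin, folded F_def])
  also have "\<dots> = (\<Sum>a\<in>A. \<Sum>l'\<in>{1..N}. \<Sum>g\<in>Gk k l'.
      if single l' g = a then real (lookup a l) * gen_weight l' g * f a else 0)"
    unfolding lookup_euler_op F_def lookup_genF
    by (simp add: sum_distrib_left sum_distrib_right if_distrib if_distribR cong: if_cong)
  also have "\<dots> = (\<Sum>l'\<in>{1..N}. \<Sum>g\<in>Gk k l'. \<Sum>a\<in>A.
      if single l' g = a then real (lookup a l) * gen_weight l' g * f a else 0)"
    by (subst sum.swap, rule sum.cong[OF refl], rule sum.swap)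
  also have "\<dots> = (\<Sum>l'\<in>{1..N}. \<Sum>g\<in>Gk k l'.
      real (lookup (single l' g) l) * gen_weight l' g * f (single l' g))"
    by (intro sum.cong refl) (use fin in \<open>auto simp: A_def sum.delta\<close>)
  also have "\<dots> = (\<Sum>l'\<in>{1..N}.
      if l' = l then (\<Sum>g\<in>Gk k l. real g * gen_weight l g * f (single l g)) else 0)"
    by (intro sum.cong refl) (auto simp: lookup_single when_def intro!: sum.neutral)
  also have "\<dots> = (\<Sum>g\<in>Gk k l. real g * gen_weight l g * f (single l g))"
    using l by (simp add: sum.delta')
  finally show ?thesis unfolding F_def f_def monom_dvd_single .
qed

definition monom_fact :: "('a \<Rightarrow>\<^sub>0 nat) \<Rightarrow> real" where
  "monom_fact m = (\<Prod>i\<in>keys m. fact (lookup m i))"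

lemma monom_fact_superset:
  "finite A \<Longrightarrow> keys m \<subseteq> A \<Longrightarrow> monom_fact m = (\<Prod>i\<in>A. fact (lookup m i))"
  unfolding monom_fact_def by (rule prod.mono_neutral_left) (auto simp: in_keys_iff)

lemma monom_fact_minus_single:
  "monom_fact (m - single i g) * fact (lookup m i) = monom_fact m * fact (lookup m i - g)"
proof -
  define P where "P m' = (\<Prod>j\<in>insert i (keys m) - {i}. fact (lookup m' j) :: real)" for m'
  have "keys (m - single i g) \<subseteq> insert i (keys m)"
    by (auto simp: in_keys_iff lookup_minus)
  then have "monom_fact (m - single i g) = fact (lookup m i - g) * P (m - single i g)"
    by (simp add: monom_fact_superset[of "insert i (keys m)"] prod.remove[of _ i] P_def
        lookup_minus)
  moreover have "monom_fact m = fact (lookup m i) * P m"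
    by (simp add: monom_fact_superset[of "insert i (keys m)"] prod.remove[of _ i] P_def
        subset_insertI)
  moreover have "P (m - single i g) = P m"
    unfolding P_def by (rule prod.cong) (auto simp: lookup_minus lookup_single)
  ultimately show ?thesis by simp
qed

definition scaled_exp_coeff :: "nat \<Rightarrow> nat \<Rightarrow> (nat \<Rightarrow>\<^sub>0 nat) \<Rightarrow> real" where
  "scaled_exp_coeff k N m = exp_coeff (genF k N) m * monom_fact m"

lemma scaled_exp_coeff_0: "0 < k \<Longrightarrow> scaled_exp_coeff k N 0 = 1"
  by (simp add: scaled_exp_coeff_def monom_fact_def exp_coeff_eq_sum[OF lookup_genF_0, of _ 0 0]
      monom_degree_def lookup_one)

lemma fact_div_fact_eq_binomial:
  assumes "1 \<le> g" "g \<le> c"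
  shows "fact (c - 1) / fact (c - g) = real ((c - 1) choose (g - 1)) * fact (g - 1)"
  using binomial_fact[of "g - 1" "c - 1", where 'a = real] assms by (simp add: field_simps)

lemma scaled_exp_coeff_rec:
  assumes k: "0 < k" and l: "1 \<le> l" "l \<le> N" and m: "0 < lookup m l"
  shows "scaled_exp_coeff k N m = (\<Sum>g\<in>Gk k l. real ((lookup m l - 1) choose (g - 1)) *
    ((-1) ^ (l * g + 1) * fact (g - 1) * real l ^ (g - 1)) *
    scaled_exp_coeff k N (m - single l g))"
proof -
  define c where "c = lookup m l"
  have "real c * scaled_exp_coeff k N m = (\<Sum>g\<in>Gk k l.
      real g * gen_weight l g * (if g \<le> c then exp_coeff (genF k N) (m - single l g) else 0) *
        monom_fact m)"
    unfolding scaled_exp_coeff_def c_def mult.assoc[symmetric] exp_coeff_genF_rec[OF k l m]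
    by (rule sum_distrib_right)
  also have "\<dots> = (\<Sum>g\<in>Gk k l. real c * (real ((c - 1) choose (g - 1)) *
      ((-1) ^ (l * g + 1) * fact (g - 1) * real l ^ (g - 1)) *
      scaled_exp_coeff k N (m - single l g)))"
  proof (intro sum.cong refl)
    fix g assume "g \<in> Gk k l"
    then have g: "1 \<le> g" using Gk_pos[OF k] by fastforce
    show "real g * gen_weight l g * (if g \<le> c then exp_coeff (genF k N) (m - single l g) else 0) *
        monom_fact m =
      real c * (real ((c - 1) choose (g - 1)) *
        ((-1) ^ (l * g + 1) * fact (g - 1) * real l ^ (g - 1)) *
        scaled_exp_coeff k N (m - single l g))"
    proof (cases "g \<le> c")
      case True
      have "monom_fact m = monom_fact (m - single l g) * (real c * (fact (c - 1) / fact (c - g)))"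
        using monom_fact_minus_single[of m l g] m
        by (simp add: c_def fact_reduce[of "lookup m l"] field_simps)
      also have "\<dots> =
          monom_fact (m - single l g) * real c * real ((c - 1) choose (g - 1)) * fact (g - 1)"
        using fact_div_fact_eq_binomial[OF g True] by simp
      finally show ?thesis
        using True g by (simp add: gen_weight_def scaled_exp_coeff_def)
    qed (use g in auto)
  qed
  finally show ?thesis
    using m unfolding c_def by (subst (asm) sum_distrib_left[symmetric]) simp
qed

section \<open>Orbits, signs and restrictions of permutations\<close>

lemma permutation_orbit_eq_range: "permutation p \<Longrightarrow> orbit p y = range (\<lambda>n. (p ^^ n) y)"
  by (simp add: orbit_altdef_permutation full_SetCompr_eq)

lemma permutation_funpow_in_orbit: "permutation p \<Longrightarrow> (p ^^ n) y \<in> orbit p y"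
  by (simp add: permutation_orbit_eq_range)

lemma orbit_eq_if_in_orbit: "permutation p \<Longrightarrow> z \<in> orbit p y \<Longrightarrow> orbit p z = orbit p y"
  by (metis cyclic_on_orbit' orbit_cyclic_eq3)

lemma disjoint_orbits: "permutation p \<Longrightarrow> orbit p y \<noteq> orbit p z \<Longrightarrow> orbit p y \<inter> orbit p z = {}"
  by (metis Int_emptyI orbit_eq_if_in_orbit)

lemma in_orbit_iff_orbit_eq: "permutation p \<Longrightarrow> y \<in> orbit p z \<longleftrightarrow> orbit p y = orbit p z"
  using orbit_eq_if_in_orbit[of p y z] permutation_self_in_orbit[of p y] by auto

lemma pairwise_disjnt_orbits:
  assumes "permutation p"
  shows "pairwise disjnt (orbit p ` A)"
proof (rule pairwiseI)
  fix C D assume "C \<in> orbit p ` A" "D \<in> orbit p ` A" "C \<noteq> D"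
  then show "disjnt C D" using disjoint_orbits[OF assms] by (auto simp: disjnt_def)
qed

lemma in_Union_orbits_iff:
  assumes "permutation p" "\<C> \<subseteq> orbit p ` A"
  shows "y \<in> \<Union>\<C> \<longleftrightarrow> orbit p y \<in> \<C>"
proof
  assume "y \<in> \<Union>\<C>"
  then obtain z where "orbit p z \<in> \<C>" "y \<in> orbit p z" using assms(2) by auto
  then show "orbit p y \<in> \<C>" using in_orbit_iff_orbit_eq[OF assms(1)] by simp
next
  assume "orbit p y \<in> \<C>"
  then show "y \<in> \<Union>\<C>" using permutation_self_in_orbit[OF assms(1), of y] by (rule UnionI)
qed

lemma card_orbit_eq_least_power: "permutation p \<Longrightarrow> card (orbit p y) = least_power p y"
proof -
  assume p: "permutation p"
  then have "orbit p y = set (support p y)"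
    using support_set[OF p] permutation_orbit_eq_range[OF p] by simp
  then show ?thesis using cycle_of_permutation[OF p] distinct_card by fastforce
qed

lemma card_orbit_pos: "permutation p \<Longrightarrow> 0 < card (orbit p y)"
  by (metis card_orbit_eq_least_power least_power_of_permutation(2))

lemma funpow_eq_self_iff_card_orbit_dvd:
  "permutation p \<Longrightarrow> (p ^^ n) y = y \<longleftrightarrow> card (orbit p y) dvd n"
  by (metis card_orbit_eq_least_power least_power_dvd)

lemma funpow_eq_iff_mod_card_orbit:
  assumes p: "permutation p"
  shows "(p ^^ a) y = (p ^^ b) y \<longleftrightarrow> a mod card (orbit p y) = b mod card (orbit p y)"
proof -
  have *: "(p ^^ a) y = (p ^^ b) y \<longleftrightarrow> a mod card (orbit p y) = b mod card (orbit p y)"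
    if "a \<le> b" for a b
  proof -
    have inj: "inj (p ^^ a)"
      by (rule bij_is_inj[OF permutation_bijective[OF permutation_funpow[OF p]]])
    have "(p ^^ b) y = (p ^^ a) ((p ^^ (b - a)) y)"
      using that by (metis add_diff_inverse_nat funpow_add not_le o_apply)
    then have "(p ^^ a) y = (p ^^ b) y \<longleftrightarrow> (p ^^ (b - a)) y = y"
      using inj by (metis injD)
    also have "\<dots> \<longleftrightarrow> card (orbit p y) dvd b - a"
      by (rule funpow_eq_self_iff_card_orbit_dvd[OF p])
    also have "\<dots> \<longleftrightarrow> a mod card (orbit p y) = b mod card (orbit p y)"
      using that by (metis mod_eq_dvd_iff_nat)
    finally show ?thesis .
  qed
  show ?thesis
    using *[of a b] *[of b a] by (metis nat_le_linear)
qed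

lemma dvd_mult_iff_div_gcd_dvd:
  fixes m k n :: nat
  assumes "0 < m"
  shows "m dvd k * n \<longleftrightarrow> m div gcd m k dvd n"
proof -
  define d where "d = gcd m k"
  have "0 < d" using assms by (simp add: d_def)
  obtain m' where m': "m = d * m'" unfolding d_def by (metis gcd_dvd1 dvdE)
  obtain k' where k': "k = d * k'" unfolding d_def by (metis gcd_dvd2 dvdE)
  have "coprime m' k'"
    using m' k' \<open>0 < d\<close> unfolding d_def
    by (metis gcd_mult_distrib_nat coprime_iff_gcd_eq_1 mult.right_neutral nat_mult_eq_cancel1)
  then have "m' dvd k' * n \<longleftrightarrow> m' dvd n" by (simp add: coprime_dvd_mult_right_iff)
  moreover have "m dvd k * n \<longleftrightarrow> m' dvd k' * n" using m' k' \<open>0 < d\<close> by (simp add: mult.assoc)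
  moreover have "m div d = m'" using m' \<open>0 < d\<close> by simp
  ultimately show ?thesis by (simp add: d_def)
qed

lemma card_orbit_funpow:
  assumes p: "permutation p"
  shows "card (orbit (p ^^ k) y) = card (orbit p y) div gcd (card (orbit p y)) k"
proof -
  define m where "m = card (orbit p y)"
  have "0 < m" using card_orbit_pos[OF p] by (simp add: m_def)
  have iff: "card (orbit (p ^^ k) y) dvd n \<longleftrightarrow> m div gcd m k dvd n" for n
  proof -
    have "card (orbit (p ^^ k) y) dvd n \<longleftrightarrow> ((p ^^ k) ^^ n) y = y"
      by (rule funpow_eq_self_iff_card_orbit_dvd[OF permutation_funpow[OF p], symmetric])
    also have "\<dots> \<longleftrightarrow> m dvd k * n"
      by (simp add: funpow_mult funpow_eq_self_iff_card_orbit_dvd[OF p] m_def)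
    also have "\<dots> \<longleftrightarrow> m div gcd m k dvd n"
      by (rule dvd_mult_iff_div_gcd_dvd[OF \<open>0 < m\<close>])
    finally show ?thesis .
  qed
  show ?thesis
    unfolding m_def[symmetric] using iff[of "m div gcd m k"] iff[of "card (orbit (p ^^ k) y)"]
    by (simp add: dvd_antisym)
qed

lemma sign_cycle_of_list:
  "distinct cs \<Longrightarrow> cs \<noteq> [] \<Longrightarrow> sign (cycle_of_list cs) = (-1) ^ (length cs + 1)"
proof (induction cs rule: cycle_of_list.induct)
  case (1 i j cs)
  have "sign (cycle_of_list (i # j # cs)) =
      sign (Transposition.transpose i j) * sign (cycle_of_list (j # cs))"
    by (simp only: cycle_of_list.simps)
      (rule sign_compose[OF permutation_swap_id permutation_of_cycle])
  also have "\<dots> = (-1) ^ (length (i # j # cs) + 1)"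
    using 1 by (simp add: sign_swap_id)
  finally show ?case .
qed (simp_all add: sign_def)

lemma sign_single_cycle:
  assumes p: "p permutes T" and "finite T" and orb: "orbit p x = T"
  shows "sign p = (-1) ^ (card T + 1)"
proof -
  have pp: "permutation p" using assms permutes_imp_permutation by blast
  have set_support: "set (support p x) = T"
    using support_set[OF pp] permutation_orbit_eq_range[OF pp] orb by simp
  have p_eq: "p = cycle_of_list (support p x)"
  proof
    fix y show "p y = cycle_of_list (support p x) y"
    proof (cases "y \<in> T")
      case True
      then show ?thesis using cycle_restrict[OF pp] set_support by blast
    next
      case False
      then show ?thesis using id_outside_supp[of y "support p x"] set_support permutes_not_in[OF p]
        by simp
    qed
  qed
  have "support p x \<noteq> []"
    using set_support orb orbit_nonempty by fastforce
  then have "sign p = (-1) ^ (length (support p x) + 1)"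
    by (subst p_eq) (rule sign_cycle_of_list[OF cycle_of_permutation[OF pp]])
  then show ?thesis
    using card_orbit_eq_least_power[OF pp, of x] orb by simp
qed

lemma card_Union_orbits:
  assumes fS: "finite S" and \<sigma>: "\<sigma> permutes S" and \<C>: "\<C> \<subseteq> {C \<in> orbit \<sigma> ` S. card C = l}"
  shows "card (\<Union>\<C>) = card \<C> * l"
proof -
  have "card (\<Union>\<C>) = (\<Sum>C\<in>\<C>. card C)"
  proof (rule card_Union_disjoint)
    show "pairwise disjnt \<C>"
      by (rule pairwise_subset[OF pairwise_disjnt_orbits[OF permutes_imp_permutation[OF fS \<sigma>]]])
        (use \<C> in auto)
    show "finite C" if C: "C \<in> \<C>" for C
    proof -
      obtain z where "z \<in> S" "C = orbit \<sigma> z" using C \<C> by auto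
      then show ?thesis using finite_subset[OF permutes_orbit_subset[OF \<sigma>] fS] by simp
    qed
  qed
  also have "\<dots> = card \<C> * l" using \<C> by (simp add: subset_iff)
  finally show ?thesis .
qed

lemma perm_restrict_funpow:
  assumes "f ` T \<subseteq> T"
  shows "perm_restrict f T ^^ n = perm_restrict (f ^^ n) T"
proof (induction n)
  case (Suc n)
  have "y \<in> T \<Longrightarrow> (f ^^ n) y \<in> T" for y
    by (induction n) (use assms in auto)
  then show ?case using Suc by (auto simp: perm_restrict_def fun_eq_iff)
qed (auto simp: perm_restrict_def)

lemma perm_restrict_permutes:
  assumes p: "p permutes S" and "finite T" and inv: "p ` T \<subseteq> T"
  shows "perm_restrict p T permutes T"
proof (rule bij_imp_permutes)
  have "inj_on p T" by (rule permutes_inj_on[OF p])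
  moreover have "p ` T = T" by (rule endo_inj_surj[OF \<open>finite T\<close> inv \<open>inj_on p T\<close>])
  ultimately have "bij_betw p T T" by (simp add: bij_betw_def)
  then show "bij_betw (perm_restrict p T) T T"
    using bij_betw_cong[of T "perm_restrict p T" p T] by (simp add: perm_restrict_simps)
qed (simp add: perm_restrict_simps)

lemma permutes_image_diff:
  assumes p: "p permutes S" and "finite T" and inv: "p ` T \<subseteq> T"
  shows "p ` (S - T) = S - T"
proof -
  have "p ` T = T" by (rule endo_inj_surj[OF \<open>finite T\<close> inv permutes_inj_on[OF p]])
  then show ?thesis
    using image_set_diff[OF permutes_inj[OF p]] permutes_image[OF p] by simp
qed

lemma funpow_comp_commute:
  assumes "f \<circ> g = g \<circ> f"
  shows "(f \<circ> g) ^^ n = (f ^^ n) \<circ> (g ^^ n)"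
proof -
  have fg: "f (g x) = g (f x)" for x using assms by (metis comp_apply)
  have "g ((f ^^ n) x) = (f ^^ n) (g x)" for n x
    by (induction n) (simp_all add: fg[symmetric])
  then have "((f \<circ> g) ^^ n) x = (f ^^ n) ((g ^^ n) x)" for x
    by (induction n) simp_all
  then show ?thesis by (simp add: fun_eq_iff)
qed

section \<open>Signed counts of \<open>k\<close>-th roots\<close>

definition kth_roots :: "nat \<Rightarrow> 'a set \<Rightarrow> ('a \<Rightarrow> 'a) \<Rightarrow> ('a \<Rightarrow> 'a) set" where
  "kth_roots k S \<sigma> = {\<tau>. \<tau> permutes S \<and> \<tau> ^^ k = \<sigma>}"

definition signed_root_count :: "nat \<Rightarrow> 'a set \<Rightarrow> ('a \<Rightarrow> 'a) \<Rightarrow> int" where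
  "signed_root_count k S \<sigma> = (\<Sum>\<tau>\<in>kth_roots k S \<sigma>. sign \<tau>)"

definition cyclic_roots :: "nat \<Rightarrow> 'a set \<Rightarrow> ('a \<Rightarrow> 'a) \<Rightarrow> 'a \<Rightarrow> ('a \<Rightarrow> 'a) set" where
  "cyclic_roots k T \<sigma> x = {\<tau>. \<tau> permutes T \<and> orbit \<tau> x = T \<and> \<tau> ^^ k = perm_restrict \<sigma> T}"

lemma finite_kth_roots: "finite S \<Longrightarrow> finite (kth_roots k S \<sigma>)"
  by (rule finite_subset[OF _ finite_permutations[of S]]) (auto simp: kth_roots_def)

lemma comp_cyclic_root_in_kth_roots:
  assumes \<sigma>: "\<sigma> permutes S" and T: "T \<subseteq> S" "x \<in> T"
    and a: "a \<in> cyclic_roots k T \<sigma> x" and b: "b \<in> kth_roots k (S - T) (perm_restrict \<sigma> (S - T))"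
  shows "a \<circ> b \<in> kth_roots k S \<sigma>" and "orbit (a \<circ> b) x = T"
    and "perm_restrict (a \<circ> b) T = a" and "perm_restrict (a \<circ> b) (S - T) = b"
proof -
  have ap: "a permutes T" and ao: "orbit a x = T" and ak: "a ^^ k = perm_restrict \<sigma> T"
    using a by (auto simp: cyclic_roots_def)
  have bp: "b permutes (S - T)" and bk: "b ^^ k = perm_restrict \<sigma> (S - T)"
    using b by (auto simp: kth_roots_def)
  have aT: "y \<in> T \<Longrightarrow> a y \<in> T" and bT: "y \<in> S - T \<Longrightarrow> b y \<in> S - T" for y
    using permutes_in_image[OF ap] permutes_in_image[OF bp] by blast+
  have aout: "y \<notin> T \<Longrightarrow> a y = y" and bout: "y \<notin> S - T \<Longrightarrow> b y = y" for y
    using permutes_not_in[OF ap] permutes_not_in[OF bp] by blast+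
  have \<sigma>T: "y \<in> T \<Longrightarrow> \<sigma> y \<in> T" for y
    using permutes_in_image[OF permutes_funpow[OF ap, of k]] ak by (metis perm_restrict_simps(1))
  have \<sigma>ST: "y \<in> S - T \<Longrightarrow> \<sigma> y \<in> S - T" for y
    using permutes_in_image[OF permutes_funpow[OF bp, of k]] bk by (metis perm_restrict_simps(1))
  have comm: "a \<circ> b = b \<circ> a"
  proof
    fix y show "(a \<circ> b) y = (b \<circ> a) y"
      using bT[of y] by (cases "y \<in> T"; cases "y \<in> S") (auto simp: aT aout bout)
  qed
  have "(a \<circ> b) ^^ k = \<sigma>"
  proof
    fix y show "((a \<circ> b) ^^ k) y = \<sigma> y"
      unfolding funpow_comp_commute[OF comm] ak bk
      using \<sigma>T \<sigma>ST permutes_not_in[OF \<sigma>]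
      by (cases "y \<in> T"; cases "y \<in> S") (auto simp: perm_restrict_def)
  qed
  moreover have "a \<circ> b permutes S"
    by (rule permutes_compose[OF permutes_subset[OF bp] permutes_subset[OF ap]]) (use T in auto)
  ultimately show "a \<circ> b \<in> kth_roots k S \<sigma>" by (simp add: kth_roots_def)
  have "orbit a x = orbit (a \<circ> b) x"
    by (rule orbit_cong0[OF T(2)]) (auto simp: aT bout)
  then show "orbit (a \<circ> b) x = T" using ao by simp
  show "perm_restrict (a \<circ> b) T = a"
    by (auto simp: perm_restrict_def fun_eq_iff bout aout)
  show "perm_restrict (a \<circ> b) (S - T) = b"
    using bT by (auto simp: perm_restrict_def fun_eq_iff bout aout)
qed

lemma kth_root_split:
  assumes "finite S" "T \<subseteq> S" "x \<in> T" and \<tau>: "\<tau> \<in> kth_roots k S \<sigma>" "orbit \<tau> x = T"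
  shows "perm_restrict \<tau> T \<in> cyclic_roots k T \<sigma> x"
    and "perm_restrict \<tau> (S - T) \<in> kth_roots k (S - T) (perm_restrict \<sigma> (S - T))"
    and "perm_restrict \<tau> T \<circ> perm_restrict \<tau> (S - T) = \<tau>"
proof -
  have \<tau>p: "\<tau> permutes S" and \<tau>k: "\<tau> ^^ k = \<sigma>" using \<tau> by (auto simp: kth_roots_def)
  have fT: "finite T" using assms finite_subset by blast
  have invT: "\<tau> ` T \<subseteq> T" using \<tau>(2) orbit.step by fast
  have invST: "\<tau> ` (S - T) \<subseteq> S - T" using permutes_image_diff[OF \<tau>p fT invT] by simp
  have ap: "perm_restrict \<tau> T permutes T" by (rule perm_restrict_permutes[OF \<tau>p fT invT])
  have bp: "perm_restrict \<tau> (S - T) permutes (S - T)"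
    by (rule perm_restrict_permutes[OF \<tau>p _ invST]) (use assms in simp)
  have "orbit \<tau> x = orbit (perm_restrict \<tau> T) x"
    by (rule orbit_cong0[OF \<open>x \<in> T\<close>]) (use invT in \<open>auto simp: perm_restrict_def\<close>)
  then show "perm_restrict \<tau> T \<in> cyclic_roots k T \<sigma> x"
    using ap \<tau>(2) by (simp add: cyclic_roots_def perm_restrict_funpow[OF invT] \<tau>k)
  show "perm_restrict \<tau> (S - T) \<in> kth_roots k (S - T) (perm_restrict \<sigma> (S - T))"
    using bp by (simp add: kth_roots_def perm_restrict_funpow[OF invST] \<tau>k)
  have "perm_restrict \<tau> T \<circ> perm_restrict \<tau> (S - T) = perm_restrict \<tau> (T \<union> (S - T))"
    by (rule perm_restrict_union[OF ap bp]) blast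
  also have "\<dots> = \<tau>" using perm_restrict_id[OF \<tau>p] \<open>T \<subseteq> S\<close> by (simp add: Un_absorb1)
  finally show "perm_restrict \<tau> T \<circ> perm_restrict \<tau> (S - T) = \<tau>" .
qed

text \<open>A root whose cycle through \<open>x\<close> is \<open>T\<close> is the same as a pair of roots on \<open>T\<close> and on \<open>S - T\<close>.\<close>

lemma sum_sign_kth_roots_with_orbit:
  assumes fS: "finite S" and \<sigma>: "\<sigma> permutes S" and T: "T \<subseteq> S" "x \<in> T"
  shows "(\<Sum>\<tau>\<in>{\<tau>\<in>kth_roots k S \<sigma>. orbit \<tau> x = T}. sign \<tau>) =
    (\<Sum>\<tau>\<in>cyclic_roots k T \<sigma> x. sign \<tau>) * signed_root_count k (S - T) (perm_restrict \<sigma> (S - T))"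
proof -
  let ?A = "cyclic_roots k T \<sigma> x" and ?B = "kth_roots k (S - T) (perm_restrict \<sigma> (S - T))"
  have "(\<Sum>(a, b)\<in>?A \<times> ?B. sign a * sign b) = (\<Sum>\<tau>\<in>{\<tau>\<in>kth_roots k S \<sigma>. orbit \<tau> x = T}. sign \<tau>)"
  proof (rule sum.reindex_bij_witness[where j = "\<lambda>(a, b). a \<circ> b"
        and i = "\<lambda>\<tau>. (perm_restrict \<tau> T, perm_restrict \<tau> (S - T))"])
    fix ab assume "ab \<in> ?A \<times> ?B"
    moreover obtain a b where "ab = (a, b)" by fastforce
    ultimately have a: "a \<in> ?A" and b: "b \<in> ?B" by auto
    note glue = comp_cyclic_root_in_kth_roots[OF \<sigma> T a b]
    show "(case ab of (a, b) \<Rightarrow> a \<circ> b) \<in> {\<tau>\<in>kth_roots k S \<sigma>. orbit \<tau> x = T}"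
      using glue \<open>ab = (a, b)\<close> by simp
    show "(perm_restrict (case ab of (a, b) \<Rightarrow> a \<circ> b) T,
        perm_restrict (case ab of (a, b) \<Rightarrow> a \<circ> b) (S - T)) = ab"
      using glue \<open>ab = (a, b)\<close> by simp
    have "finite T" using fS T finite_subset by blast
    then have "permutation a" "permutation b"
      using a b fS by (auto simp: cyclic_roots_def kth_roots_def intro: permutes_imp_permutation)
    then show "sign (case ab of (a, b) \<Rightarrow> a \<circ> b) = (case ab of (a, b) \<Rightarrow> sign a * sign b)"
      using \<open>ab = (a, b)\<close> by (simp add: sign_compose)
  next
    fix \<tau> assume "\<tau> \<in> {\<tau>\<in>kth_roots k S \<sigma>. orbit \<tau> x = T}"
    then have "\<tau> \<in> kth_roots k S \<sigma>" "orbit \<tau> x = T" by auto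
    note split = kth_root_split[OF fS T this]
    show "(perm_restrict \<tau> T, perm_restrict \<tau> (S - T)) \<in> ?A \<times> ?B" using split(1,2) by simp
    show "(case (perm_restrict \<tau> T, perm_restrict \<tau> (S - T)) of (a, b) \<Rightarrow> a \<circ> b) = \<tau>"
      using split(3) by simp
  qed
  then show ?thesis
    by (simp add: signed_root_count_def sum_product sum.cartesian_product)
qed

text \<open>A cyclic root of length \<open>m\<close> has \<open>k\<close>-th power with all cycles of length \<open>m div gcd m k\<close>;
  so \<open>T\<close> is the union of \<open>g = gcd m k\<close> cycles of \<open>\<sigma>\<close> of a common length \<open>l\<close>, and
  \<open>gcd (g * l) k = g\<close>.\<close>

lemma cyclic_root_orbits:
  assumes fS: "finite S" and \<sigma>: "\<sigma> permutes S" and T: "T \<subseteq> S" "x \<in> T"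
    and \<tau>: "\<tau> \<in> cyclic_roots k T \<sigma> x"
  obtains \<C> where "\<C> \<subseteq> {C \<in> orbit \<sigma> ` S. card C = card (orbit \<sigma> x)}" "orbit \<sigma> x \<in> \<C>"
    "card \<C> \<in> Gk k (card (orbit \<sigma> x))" "T = \<Union>\<C>"
proof -
  have \<tau>p: "\<tau> permutes T" and \<tau>o: "orbit \<tau> x = T" and \<tau>k: "\<tau> ^^ k = perm_restrict \<sigma> T"
    using \<tau> by (auto simp: cyclic_roots_def)
  have fT: "finite T" using fS T finite_subset by blast
  define m where "m = card T"
  define l where "l = card (orbit \<sigma> x)"
  define \<C> where "\<C> = orbit \<sigma> ` T"
  have \<tau>perm: "permutation \<tau>" using \<tau>p fT permutes_imp_permutation by blast
  have \<sigma>perm: "permutation \<sigma>" using \<sigma> fS permutes_imp_permutation by blast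
  have \<tau>kp: "(\<tau> ^^ k) permutes T" by (rule permutes_funpow[OF \<tau>p])
  have orbit_\<sigma>: "orbit \<sigma> y = orbit (\<tau> ^^ k) y" if "y \<in> T" for y
  proof (rule orbit_cong0[OF that])
    show "\<sigma> \<in> T \<rightarrow> T"
    proof
      fix y assume "y \<in> T"
      then have "(\<tau> ^^ k) y \<in> T" using permutes_in_image[OF \<tau>kp] by simp
      then show "\<sigma> y \<in> T" using \<open>y \<in> T\<close> by (simp add: \<tau>k perm_restrict_def)
    qed
  qed (simp add: \<tau>k perm_restrict_def)
  have card_orbit_\<sigma>: "card (orbit \<sigma> y) = m div gcd m k" if "y \<in> T" for y
    using card_orbit_funpow[OF \<tau>perm, of k y] orbit_eq_if_in_orbit[OF \<tau>perm, of y x] \<tau>o that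
    by (simp add: orbit_\<sigma>[OF that] m_def)
  have orbit_subset: "orbit \<sigma> y \<subseteq> T" if "y \<in> T" for y
    using orbit_\<sigma>[OF that] permutes_orbit_subset[OF \<tau>kp that] by simp
  have "0 < m" using T fT by (auto simp: m_def card_gt_0_iff)
  then have m: "m = l * gcd m k"
    using card_orbit_\<sigma>[OF T(2)] by (simp add: l_def)
  have \<C>: "\<C> \<subseteq> {C \<in> orbit \<sigma> ` S. card C = l}"
    using T card_orbit_\<sigma> by (auto simp: \<C>_def l_def)
  have T_eq: "T = \<Union>\<C>"
    using orbit_subset permutation_self_in_orbit[OF \<sigma>perm] by (auto simp: \<C>_def)
  have "m = card \<C> * l"
    unfolding m_def T_eq by (rule card_Union_orbits[OF fS \<sigma> \<C>])
  then have "card \<C> * l = gcd m k * l" using m by (simp add: mult.commute)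
  moreover have "0 < l" using m \<open>0 < m\<close> by (cases l) auto
  ultimately have "card \<C> = gcd m k" by simp
  then have "card \<C> \<in> Gk k l" using m by (simp add: Gk_def mult.commute)
  moreover have "orbit \<sigma> x \<in> \<C>" using T by (simp add: \<C>_def)
  ultimately show thesis using that \<C> T_eq by (simp add: l_def)
qed

lemma mod_mult_cancel_invertible:
  fixes a c l u v :: nat
  assumes ca: "(c * a) mod l = 1 mod l" and e: "(a * u) mod l = (a * v) mod l"
  shows "u mod l = v mod l"
proof -
  have "u mod l = ((c * a) * u) mod l" using ca by (metis mod_mult_left_eq mult_1)
  also have "\<dots> = (c * (a * u)) mod l" by (simp add: mult.assoc)
  also have "\<dots> = (c * ((a * u) mod l)) mod l" by (simp add: mod_mult_right_eq)
  also have "\<dots> = (c * ((a * v) mod l)) mod l" using e by simp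
  also have "\<dots> = ((c * a) * v) mod l" by (simp add: mod_mult_right_eq mult.assoc)
  also have "\<dots> = v mod l" using ca by (metis mod_mult_left_eq mult_1)
  finally show ?thesis .
qed

context
  fixes \<D> :: "'a set set" and U :: "'a set" and f :: "'a \<Rightarrow> 'a set" and l :: nat
  assumes finite_blocks: "finite \<D>" and card_block: "\<And>D. D \<in> \<D> \<Longrightarrow> card D = l" and "0 < l"
    and block_in: "\<And>y. y \<in> U \<Longrightarrow> f y \<in> \<D>"
    and in_block_iff: "\<And>D y. D \<in> \<D> \<Longrightarrow> y \<in> D \<longleftrightarrow> y \<in> U \<and> f y = D"
begin

lemma card_outside_blocks:
  assumes "set ys \<subseteq> U" "distinct (map f ys)"
  shows "card {y \<in> U. f y \<notin> f ` set ys} = (card \<D> - length ys) * l"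
proof -
  have "finite D" if "D \<in> \<D>" for D
    using card_block[OF that] \<open>0 < l\<close> card_ge_0_finite by metis
  moreover have "pairwise disjnt (\<D> - f ` set ys)"
    using in_block_iff by (fastforce simp: pairwise_def disjnt_def)
  moreover have "{y \<in> U. f y \<notin> f ` set ys} = \<Union>(\<D> - f ` set ys)"
    using block_in in_block_iff by blast
  ultimately have "card {y \<in> U. f y \<notin> f ` set ys} = (\<Sum>D\<in>\<D> - f ` set ys. card D)"
    using card_Union_disjoint[of "\<D> - f ` set ys"] by auto
  also have "\<dots> = card (\<D> - f ` set ys) * l" by (simp add: card_block)
  also have "card (\<D> - f ` set ys) = card \<D> - length ys"
    using assms block_in finite_blocks distinct_card[OF assms(2)]
    by (subst card_Diff_subset) (auto simp: image_subset_iff)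
  finally show ?thesis .
qed

lemma card_lists_distinct_blocks:
  "card {ys. length ys = r \<and> set ys \<subseteq> U \<and> distinct (map f ys)} = (\<Prod>i<r. (card \<D> - i)) * l ^ r"
proof (induction r)
  case 0
  have "{ys. length ys = 0 \<and> set ys \<subseteq> U \<and> distinct (map f ys)} = {[]}" by auto
  then show ?case by simp
next
  case (Suc r)
  define L where "L r = {ys. length ys = r \<and> set ys \<subseteq> U \<and> distinct (map f ys)}" for r
  define B where "B ys = {y \<in> U. f y \<notin> f ` set ys}" for ys
  have "finite U"
  proof (rule finite_subset)
    show "U \<subseteq> \<Union>\<D>" using block_in in_block_iff by blast
    show "finite (\<Union>\<D>)" using finite_blocks card_block \<open>0 < l\<close> by (auto intro: card_ge_0_finite)
  qed
  have "L (Suc r) = (\<lambda>(ys, y). y # ys) ` (SIGMA ys:L r. B ys)"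
  proof (intro equalityI subsetI)
    fix zs assume zs: "zs \<in> L (Suc r)"
    then obtain y ys where "zs = y # ys" by (cases zs) (auto simp: L_def)
    with zs show "zs \<in> (\<lambda>(ys, y). y # ys) ` (SIGMA ys:L r. B ys)"
      by (force simp: L_def B_def)
  qed (auto simp: L_def B_def)
  moreover have "inj_on (\<lambda>(ys, y). y # ys) (SIGMA ys:L r. B ys)" by (auto simp: inj_on_def)
  ultimately have "card (L (Suc r)) = card (SIGMA ys:L r. B ys)" by (simp add: card_image)
  also have "\<dots> = (\<Sum>ys\<in>L r. card (B ys))"
    by (rule card_SigmaI)
      (use \<open>finite U\<close> in \<open>auto simp: L_def B_def intro: finite_subset[OF _ finite_lists_length_eq]\<close>)
  also have "\<dots> = card (L r) * ((card \<D> - r) * l)"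
    using card_outside_blocks by (simp add: L_def B_def)
  finally show ?case using Suc.IH by (simp add: L_def algebra_simps)
qed

end

lemma prod_rev_fact: "(\<Prod>i<n. (n - i)) = fact n"
  using fact_prod_rev[of n, where 'a=nat] by (simp add: atLeast0LessThan)

locale cycle_family =
  fixes k :: nat and S :: "'a set" and \<sigma> :: "'a \<Rightarrow> 'a" and x :: 'a and l :: nat
    and \<C> :: "'a set set"
  assumes k: "0 < k" and fS: "finite S" and \<sigma>: "\<sigma> permutes S"
    and Csub: "\<C> \<subseteq> {C \<in> orbit \<sigma> ` S. card C = l}" and xC: "orbit \<sigma> x \<in> \<C>"
    and gG: "card \<C> \<in> Gk k l"
begin

abbreviation T :: "'a set" where "T \<equiv> \<Union>\<C>"

abbreviation g :: nat where "g \<equiv> card \<C>"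

lemma \<sigma>_permutation: "permutation \<sigma>" using permutes_imp_permutation[OF fS \<sigma>] .

lemma finite_\<C>: "finite \<C>"
proof (rule finite_subset)
  show "\<C> \<subseteq> orbit \<sigma> ` S" using Csub by blast
  show "finite (orbit \<sigma> ` S)" using fS by simp
qed

lemma \<C>_orbits: "\<C> \<subseteq> orbit \<sigma> ` S"
  using Csub by blast

lemma in_T_iff: "y \<in> T \<longleftrightarrow> orbit \<sigma> y \<in> \<C>"
  by (rule in_Union_orbits_iff[OF \<sigma>_permutation \<C>_orbits])

lemma x_in_T: "x \<in> T"
  using xC unfolding in_T_iff .

lemma T_subset: "T \<subseteq> S"
proof
  fix y assume "y \<in> T"
  then obtain z where "z \<in> S" "y \<in> orbit \<sigma> z" using \<C>_orbits by auto
  then show "y \<in> S" using permutes_orbit_subset[OF \<sigma>] by auto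
qed

lemma finite_T: "finite T" by (rule finite_subset[OF T_subset fS])

lemma card_orbit_in_T: "y \<in> T \<Longrightarrow> card (orbit \<sigma> y) = l"
  unfolding in_T_iff using Csub by auto

lemma l_pos: "l > 0" using card_orbit_in_T[OF x_in_T] card_orbit_pos[OF \<sigma>_permutation, of x] by simp

lemma g_pos: "g > 0" using xC finite_\<C> by (auto simp: card_gt_0_iff)

lemma \<sigma>_funpow_in_T: "y \<in> T \<Longrightarrow> (\<sigma> ^^ n) y \<in> T"
  unfolding in_T_iff
  using in_orbit_iff_orbit_eq[OF \<sigma>_permutation] permutation_funpow_in_orbit[OF \<sigma>_permutation]
  by simp

lemma card_T: "card T = l * g"
  using card_Union_orbits[OF fS \<sigma> Csub] by simp

definition k' :: nat where "k' = k div g"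

lemma k_eq: "k = g * k'"
  using Gk_dvd[OF gG] unfolding k'_def by simp

lemma coprime_l_k': "coprime l k'"
proof -
  have "gcd (g * l) k = g" using gG by (simp add: Gk_def)
  then have "g * gcd l k' = g" using k_eq by (simp add: gcd_mult_distrib_nat)
  then show ?thesis using g_pos by (simp add: coprime_iff_gcd_eq_1)
qed

definition \<alpha> :: nat where "\<alpha> = (SOME a. (k' * a) mod l = 1 mod l)"

lemma k'_\<alpha>_mod: "(k' * \<alpha>) mod l = 1 mod l"
proof -
  have "0 < k'" using k_eq k by (cases k') auto
  then obtain a b where "k' * a = l * b + gcd k' l" using bezout_nat by blast
  then have "k' * a = l * b + 1" using coprime_l_k' by (simp add: coprime_iff_gcd_eq_1 gcd.commute)
  then have "(k' * a) mod l = 1 mod l" by (simp only: mod_mult_self4)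
  then show ?thesis unfolding \<alpha>_def by (rule someI)
qed

lemma \<sigma>_funpow_eq_iff: "y \<in> T \<Longrightarrow> (\<sigma> ^^ a) y = (\<sigma> ^^ b) y \<longleftrightarrow> a mod l = b mod l"
  using funpow_eq_iff_mod_card_orbit[OF \<sigma>_permutation, of a y b] card_orbit_in_T by simp

context
  fixes \<tau> assumes \<tau>: "\<tau> \<in> cyclic_roots k T \<sigma> x"
begin

lemma cyclic_root_permutes: "\<tau> permutes T"
  using \<tau> by (simp add: cyclic_roots_def)

lemma cyclic_root_permutation: "permutation \<tau>"
  by (rule permutes_imp_permutation[OF finite_T cyclic_root_permutes])

lemma cyclic_root_orbit: "orbit \<tau> y = T" if "y \<in> T"
  using \<tau> orbit_eq_if_in_orbit[OF cyclic_root_permutation, of y x] that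
  by (simp add: cyclic_roots_def)

lemma cyclic_root_funpow_in_T: "(\<tau> ^^ n) y \<in> T" if "y \<in> T"
  using permutation_funpow_in_orbit[OF cyclic_root_permutation, of n y] cyclic_root_orbit[OF that]
  by simp

lemma cyclic_root_funpow_eq_iff: "(\<tau> ^^ a) y = (\<tau> ^^ b) y \<longleftrightarrow> a mod (l * g) = b mod (l * g)"
  if "y \<in> T"
  using funpow_eq_iff_mod_card_orbit[OF cyclic_root_permutation, of a y b]
    cyclic_root_orbit[OF that]
  by (simp add: card_T)

lemma \<sigma>_funpow_eq_cyclic_root_funpow: "(\<sigma> ^^ s) y = (\<tau> ^^ (k * s)) y" if "y \<in> T"
proof -
  have "\<sigma> ` T \<subseteq> T" using \<sigma>_funpow_in_T[of _ 1] by auto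
  moreover have "\<tau> ^^ k = perm_restrict \<sigma> T" using \<tau> by (simp add: cyclic_roots_def)
  ultimately show ?thesis
    using that by (simp add: funpow_mult[symmetric] perm_restrict_funpow perm_restrict_def)
qed

text \<open>Since \<open>\<tau>\<close> is an \<open>l * g\<close>-cycle and \<open>k * \<alpha> \<equiv> g (mod l * g)\<close>, the power \<open>\<tau> ^^ g\<close> acts on
  \<open>T\<close> as \<open>\<tau> ^^ (k * \<alpha>) = \<sigma> ^^ \<alpha>\<close>.\<close>

lemma cyclic_root_funpow_g: "(\<tau> ^^ g) y = (\<sigma> ^^ \<alpha>) y" if "y \<in> T"
proof -
  have "k * \<alpha> = g * (k' * \<alpha>)" using k_eq by simp
  then have "(k * \<alpha>) mod (l * g) = (g * (k' * \<alpha>)) mod (g * l)"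
    by (simp only: mult.commute[of l g])
  also have "\<dots> = g * ((k' * \<alpha>) mod l)" by (rule mult_mod_right[symmetric])
  also have "\<dots> = (g * 1) mod (g * l)" by (simp only: k'_\<alpha>_mod mult_mod_right)
  also have "\<dots> = g mod (l * g)" by (simp add: mult.commute)
  finally have "(\<tau> ^^ (k * \<alpha>)) y = (\<tau> ^^ g) y"
    using cyclic_root_funpow_eq_iff[OF that] by simp
  then show ?thesis using \<sigma>_funpow_eq_cyclic_root_funpow[OF that] by simp
qed

lemma cyclic_root_funpow_g_mult_add: "(\<tau> ^^ (g * j + i)) x = (\<sigma> ^^ (\<alpha> * j)) ((\<tau> ^^ i) x)"
proof (induction j)
  case (Suc j)
  have "g * Suc j + i = g + (g * j + i)" by simp
  then have "(\<tau> ^^ (g * Suc j + i)) x = (\<tau> ^^ g) ((\<tau> ^^ (g * j + i)) x)"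
    by (simp only: funpow_add o_apply)
  also have "\<dots> = (\<sigma> ^^ \<alpha>) ((\<tau> ^^ (g * j + i)) x)"
    using cyclic_root_funpow_g[OF cyclic_root_funpow_in_T[OF x_in_T]] by simp
  also have "\<dots> = (\<sigma> ^^ \<alpha>) ((\<sigma> ^^ (\<alpha> * j)) ((\<tau> ^^ i) x))"
    by (simp only: Suc)
  also have "\<dots> = (\<sigma> ^^ (\<alpha> + \<alpha> * j)) ((\<tau> ^^ i) x)"
    by (simp only: funpow_add o_apply)
  finally show ?case by simp
qed simp

end

text \<open>Hence a cyclic root \<open>\<tau>\<close> is determined by \<open>\<tau> x, \<dots>, \<tau> ^^ (g - 1) x\<close>, which lie in the other
  \<open>g - 1\<close> cycles of \<open>\<C>\<close>, one in each; conversely every such list is extended to a cyclic root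
  by \<open>\<tau> ^^ (g * j + i) x = \<sigma> ^^ (\<alpha> * j) (\<tau> ^^ i x)\<close>.\<close>

definition first_points :: "('a \<Rightarrow> 'a) \<Rightarrow> 'a list" where
  "first_points \<tau> = map (\<lambda>i. (\<tau> ^^ i) x) [1..<g]"

definition transversals :: "'a list set" where
  "transversals = {ys. length ys = g - 1 \<and> set ys \<subseteq> T \<and> distinct (map (orbit \<sigma>) (x # ys))}"

lemma x_Cons_first_points: "x # first_points \<tau> = map (\<lambda>i. (\<tau> ^^ i) x) [0..<g]"
  using g_pos by (simp add: first_points_def upt_conv_Cons)

lemma first_points_in_transversals:
  assumes \<tau>: "\<tau> \<in> cyclic_roots k T \<sigma> x"
  shows "first_points \<tau> \<in> transversals"
proof -
  have "inj_on (\<lambda>i. orbit \<sigma> ((\<tau> ^^ i) x)) {0..<g}"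
  proof (rule inj_onI)
    fix i j assume i: "i \<in> {0..<g}" and j: "j \<in> {0..<g}"
      and eq: "orbit \<sigma> ((\<tau> ^^ i) x) = orbit \<sigma> ((\<tau> ^^ j) x)"
    have "(\<tau> ^^ j) x \<in> orbit \<sigma> ((\<tau> ^^ i) x)"
      using eq by (simp add: in_orbit_iff_orbit_eq[OF \<sigma>_permutation])
    then obtain s where "(\<tau> ^^ j) x = (\<sigma> ^^ s) ((\<tau> ^^ i) x)"
      using permutation_orbit_eq_range[OF \<sigma>_permutation] by blast
    also have "\<dots> = (\<tau> ^^ (k * s + i)) x"
      using \<sigma>_funpow_eq_cyclic_root_funpow[OF \<tau> cyclic_root_funpow_in_T[OF \<tau> x_in_T]]
      by (simp add: funpow_add)
    also have "k * s + i = i + g * (k' * s)" using k_eq by (simp add: mult.assoc)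
    finally have "j mod (l * g) = (i + g * (k' * s)) mod (l * g)"
      using cyclic_root_funpow_eq_iff[OF \<tau> x_in_T] by simp
    then have "j mod (l * g) mod g = (i + g * (k' * s)) mod (l * g) mod g" by simp
    then have "j mod g = (i + g * (k' * s)) mod g" by (simp add: mod_mod_cancel)
    then show "i = j" using i j by simp
  qed
  then have "distinct (map (orbit \<sigma>) (x # first_points \<tau>))"
    unfolding x_Cons_first_points by (simp add: distinct_map comp_def)
  moreover have "set (first_points \<tau>) \<subseteq> T"
    using cyclic_root_funpow_in_T[OF \<tau> x_in_T] by (auto simp: first_points_def)
  moreover have "length (first_points \<tau>) = g - 1" by (simp add: first_points_def)
  ultimately show ?thesis unfolding transversals_def by blast
qed

lemma inj_on_first_points: "inj_on first_points (cyclic_roots k T \<sigma> x)"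
proof (rule inj_onI)
  fix \<tau>1 \<tau>2 assume \<tau>1: "\<tau>1 \<in> cyclic_roots k T \<sigma> x" and \<tau>2: "\<tau>2 \<in> cyclic_roots k T \<sigma> x"
    and eq: "first_points \<tau>1 = first_points \<tau>2"
  have small: "(\<tau>1 ^^ i) x = (\<tau>2 ^^ i) x" if "i < g" for i
    using arg_cong[OF eq, of "\<lambda>ys. (x # ys) ! i"] that by (simp add: x_Cons_first_points)
  have all: "(\<tau>1 ^^ p) x = (\<tau>2 ^^ p) x" for p
  proof -
    have "p mod g < g" using g_pos by simp
    then have "(\<tau>1 ^^ (g * (p div g) + p mod g)) x = (\<tau>2 ^^ (g * (p div g) + p mod g)) x"
      by (simp only: cyclic_root_funpow_g_mult_add[OF \<tau>1] cyclic_root_funpow_g_mult_add[OF \<tau>2]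
          small)
    then show ?thesis by simp
  qed
  show "\<tau>1 = \<tau>2"
  proof
    fix y show "\<tau>1 y = \<tau>2 y"
    proof (cases "y \<in> T")
      case True
      then obtain p where "y = (\<tau>1 ^^ p) x"
        using cyclic_root_orbit[OF \<tau>1 x_in_T]
          permutation_orbit_eq_range[OF cyclic_root_permutation[OF \<tau>1]]
        by blast
      then show ?thesis using all[of "Suc p"] all[of p] by simp
    next
      case False
      then show ?thesis
        using permutes_not_in[OF cyclic_root_permutes[OF \<tau>1]]
          permutes_not_in[OF cyclic_root_permutes[OF \<tau>2]]
        by simp
    qed
  qed
qed

definition cycle_list :: "'a list \<Rightarrow> 'a list" where
  "cycle_list ys = map (\<lambda>p. (\<sigma> ^^ (\<alpha> * (p div g))) ((x # ys) ! (p mod g))) [0..<l * g]"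

definition cycle_of_transversal :: "'a list \<Rightarrow> ('a \<Rightarrow> 'a)" where
  "cycle_of_transversal ys = cycle_of_list (cycle_list ys)"

lemma l_mult_g_pos: "0 < l * g"
  using l_pos g_pos by simp

lemma transversal_facts:
  assumes ys: "ys \<in> transversals"
  shows "length (x # ys) = g" and "\<And>i. i < g \<Longrightarrow> (x # ys) ! i \<in> T"
    and "\<And>i j. i < g \<Longrightarrow> j < g \<Longrightarrow>
      orbit \<sigma> ((x # ys) ! i) = orbit \<sigma> ((x # ys) ! j) \<Longrightarrow> i = j"
proof -
  have len: "length ys = g - 1" and sub: "set ys \<subseteq> T" and d: "distinct (map (orbit \<sigma>) (x # ys))"
    using ys by (auto simp: transversals_def)
  show lg: "length (x # ys) = g" using len g_pos by simp
  show "\<And>i. i < g \<Longrightarrow> (x # ys) ! i \<in> T"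
  proof -
    fix i assume "i < g"
    then have "(x # ys) ! i \<in> set (x # ys)" using lg by (metis nth_mem)
    then show "(x # ys) ! i \<in> T" using sub x_in_T by auto
  qed
  show "\<And>i j. i < g \<Longrightarrow> j < g \<Longrightarrow>
      orbit \<sigma> ((x # ys) ! i) = orbit \<sigma> ((x # ys) ! j) \<Longrightarrow> i = j"
    using nth_eq_iff_index_eq[OF d] lg by (metis length_map nth_map)
qed

lemma length_cycle_list: "length (cycle_list ys) = l * g"
  by (simp add: cycle_list_def)

lemma nth_cycle_list:
  "p < l * g \<Longrightarrow> cycle_list ys ! p = (\<sigma> ^^ (\<alpha> * (p div g))) ((x # ys) ! (p mod g))"
  by (simp add: cycle_list_def)

lemma div_g_less_l: "p < l * g \<Longrightarrow> p div g < l"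
  by (simp add: less_mult_imp_div_less)

lemma nth_cycle_list_in:
  assumes ys: "ys \<in> transversals" and p: "p < l * g"
  shows "cycle_list ys ! p \<in> T" and "orbit \<sigma> (cycle_list ys ! p) = orbit \<sigma> ((x # ys) ! (p mod g))"
proof -
  have z: "(x # ys) ! (p mod g) \<in> T" using transversal_facts(2)[OF ys] g_pos by simp
  show "cycle_list ys ! p \<in> T" using nth_cycle_list[OF p] \<sigma>_funpow_in_T[OF z] by simp
  show "orbit \<sigma> (cycle_list ys ! p) = orbit \<sigma> ((x # ys) ! (p mod g))"
    using nth_cycle_list[OF p] orbit_eq_if_in_orbit[OF \<sigma>_permutation]
      permutation_funpow_in_orbit[OF \<sigma>_permutation]
    by metis
qed

lemma distinct_cycle_list:
  assumes ys: "ys \<in> transversals"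
  shows "distinct (cycle_list ys)"
  unfolding distinct_conv_nth length_cycle_list
proof (intro allI impI)
  fix p q assume p: "p < l * g" and q: "q < l * g" and ne: "p \<noteq> q"
  show "cycle_list ys ! p \<noteq> cycle_list ys ! q"
  proof
    assume eq: "cycle_list ys ! p = cycle_list ys ! q"
    have "orbit \<sigma> ((x # ys) ! (p mod g)) = orbit \<sigma> ((x # ys) ! (q mod g))"
      using nth_cycle_list_in(2)[OF ys p] nth_cycle_list_in(2)[OF ys q] eq by simp
    then have im: "p mod g = q mod g" using transversal_facts(3)[OF ys] g_pos by simp
    define z where "z = (x # ys) ! (p mod g)"
    have zT: "z \<in> T" using transversal_facts(2)[OF ys] g_pos by (simp add: z_def)
    have "(\<sigma> ^^ (\<alpha> * (p div g))) z = (\<sigma> ^^ (\<alpha> * (q div g))) z"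
      using eq nth_cycle_list[OF p] nth_cycle_list[OF q] im by (simp add: z_def)
    then have "(\<alpha> * (p div g)) mod l = (\<alpha> * (q div g)) mod l"
      using \<sigma>_funpow_eq_iff[OF zT] by simp
    then have "(p div g) mod l = (q div g) mod l"
      using mod_mult_cancel_invertible[OF k'_\<alpha>_mod] by blast
    then have "p div g = q div g" using div_g_less_l[OF p] div_g_less_l[OF q] by simp
    then have "p = q" using im by (metis div_mult_mod_eq)
    then show False using ne by simp
  qed
qed

lemma set_cycle_list:
  assumes ys: "ys \<in> transversals"
  shows "set (cycle_list ys) = T"
proof (rule card_subset_eq[OF finite_T])
  show "set (cycle_list ys) \<subseteq> T"
    using nth_cycle_list_in(1)[OF ys] by (auto simp: in_set_conv_nth length_cycle_list)
  show "card (set (cycle_list ys)) = card T"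
    using distinct_card[OF distinct_cycle_list[OF ys]] length_cycle_list card_T by simp
qed

lemma nth_cycle_list_0: "cycle_list ys ! 0 = x"
  using l_mult_g_pos by (simp add: nth_cycle_list)

lemma funpow_cycle_of_transversal:
  assumes ys: "ys \<in> transversals" and p: "p < l * g"
  shows "(cycle_of_transversal ys ^^ n) (cycle_list ys ! p) = cycle_list ys ! ((n + p) mod (l * g))"
proof -
  have "map (cycle_of_transversal ys ^^ n) (cycle_list ys) = rotate n (cycle_list ys)"
    unfolding cycle_of_transversal_def by (rule cyclic_rotation[OF distinct_cycle_list[OF ys]])
  then have "map (cycle_of_transversal ys ^^ n) (cycle_list ys) ! p = rotate n (cycle_list ys) ! p"
    by simp
  then show ?thesis using p length_cycle_list by (simp add: nth_rotate)
qed

lemma orbit_cycle_of_transversal: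
  assumes ys: "ys \<in> transversals"
  shows "orbit (cycle_of_transversal ys) x = T"
proof -
  have pp: "permutation (cycle_of_transversal ys)"
    unfolding cycle_of_transversal_def by (rule permutation_of_cycle)
  have "orbit (cycle_of_transversal ys) x = range (\<lambda>n. (cycle_of_transversal ys ^^ n) x)"
    by (rule permutation_orbit_eq_range[OF pp])
  also have "\<dots> = range (\<lambda>n. cycle_list ys ! (n mod (l * g)))"
    using funpow_cycle_of_transversal[OF ys l_mult_g_pos] nth_cycle_list_0 by simp
  also have "\<dots> = set (cycle_list ys)"
  proof
    show "range (\<lambda>n. cycle_list ys ! (n mod (l * g))) \<subseteq> set (cycle_list ys)"
      using l_mult_g_pos length_cycle_list by auto
    show "set (cycle_list ys) \<subseteq> range (\<lambda>n. cycle_list ys ! (n mod (l * g)))"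
    proof
      fix y assume "y \<in> set (cycle_list ys)"
      then obtain p where "p < l * g" "y = cycle_list ys ! p"
        using length_cycle_list by (metis in_set_conv_nth)
      then show "y \<in> range (\<lambda>n. cycle_list ys ! (n mod (l * g)))" by (metis mod_less rangeI)
    qed
  qed
  finally show ?thesis using set_cycle_list[OF ys] by simp
qed

lemma funpow_k_cycle_of_transversal:
  assumes ys: "ys \<in> transversals" and "y \<in> T"
  shows "(cycle_of_transversal ys ^^ k) y = \<sigma> y"
proof -
  obtain p where p: "p < l * g" and y: "y = cycle_list ys ! p"
    using set_cycle_list[OF ys] length_cycle_list assms(2) by (metis in_set_conv_nth)
  define i where "i = p mod g"
  define j where "j = p div g"
  define z where "z = (x # ys) ! i"
  have zT: "z \<in> T" using transversal_facts(2)[OF ys] g_pos by (simp add: z_def i_def)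
  have ig: "i < g" using g_pos by (simp add: i_def)
  have pe: "k + p = g * (j + k') + i" using k_eq by (simp add: i_def j_def algebra_simps)
  define q where "q = g * ((j + k') mod l) + i"
  have qe: "(k + p) mod (l * g) = q"
    unfolding pe q_def mult.commute[of l g] using ig by (simp add: mod_mult2_eq)
  have ql: "q < l * g" using qe l_mult_g_pos by (metis mod_less_divisor)
  have qdiv: "q div g = (j + k') mod l" and qmod: "q mod g = i"
    using ig g_pos by (simp_all add: q_def)
  have "(cycle_of_transversal ys ^^ k) y = cycle_list ys ! q"
    using funpow_cycle_of_transversal[OF ys p, of k] y qe by simp
  also have "\<dots> = (\<sigma> ^^ (\<alpha> * ((j + k') mod l))) z"
    using nth_cycle_list[OF ql] qdiv qmod by (simp add: z_def)
  also have "\<dots> = (\<sigma> ^^ (Suc (\<alpha> * j))) z"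
  proof -
    have "(\<alpha> * ((j + k') mod l)) mod l = (\<alpha> * (j + k')) mod l"
      by (simp add: mod_mult_right_eq)
    also have "\<dots> = (\<alpha> * j + (k' * \<alpha>) mod l) mod l"
      by (simp add: algebra_simps mod_add_right_eq)
    also have "\<dots> = (Suc (\<alpha> * j)) mod l" using k'_\<alpha>_mod by (simp add: mod_add_right_eq)
    finally show ?thesis by (simp only: \<sigma>_funpow_eq_iff[OF zT])
  qed
  also have "\<dots> = \<sigma> (cycle_list ys ! p)" using nth_cycle_list[OF p] by (simp add: z_def i_def j_def)
  finally show ?thesis using y by simp
qed

lemma cycle_of_transversal_in_cyclic_roots:
  assumes ys: "ys \<in> transversals"
  shows "cycle_of_transversal ys \<in> cyclic_roots k T \<sigma> x"
proof -
  have perm: "cycle_of_transversal ys permutes T"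
    unfolding cycle_of_transversal_def using cycle_permutes set_cycle_list[OF ys] by metis
  have "(cycle_of_transversal ys ^^ k) y = perm_restrict \<sigma> T y" for y
    using funpow_k_cycle_of_transversal[OF ys] permutes_not_in[OF permutes_funpow[OF perm, of k]]
    by (cases "y \<in> T") (simp_all add: perm_restrict_def)
  then show ?thesis using perm orbit_cycle_of_transversal[OF ys] by (auto simp: cyclic_roots_def)
qed

lemma first_points_cycle_of_transversal:
  assumes ys: "ys \<in> transversals"
  shows "first_points (cycle_of_transversal ys) = ys"
proof (rule nth_equalityI)
  have len: "length ys = g - 1" using ys by (simp add: transversals_def)
  then show "length (first_points (cycle_of_transversal ys)) = length ys"
    by (simp add: first_points_def)
  fix t assume "t < length (first_points (cycle_of_transversal ys))"
  then have t: "t < g - 1" by (simp add: first_points_def)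
  moreover have "g \<le> l * g" using l_pos by simp
  ultimately have tl: "Suc t < l * g" by linarith
  have "first_points (cycle_of_transversal ys) ! t = (cycle_of_transversal ys ^^ Suc t) x"
    using t by (simp add: first_points_def)
  also have "\<dots> = cycle_list ys ! Suc t"
    using funpow_cycle_of_transversal[OF ys l_mult_g_pos, of "Suc t"] nth_cycle_list_0 tl by simp
  also have "\<dots> = (x # ys) ! Suc t" using nth_cycle_list[OF tl] t by simp
  finally show "first_points (cycle_of_transversal ys) ! t = ys ! t" by simp
qed

lemma card_transversals: "card transversals = fact (g - 1) * l ^ (g - 1)"
proof -
  define \<D> where "\<D> = \<C> - {orbit \<sigma> x}"
  have in_orbit_iff: "y \<in> orbit \<sigma> z \<longleftrightarrow> orbit \<sigma> y = orbit \<sigma> z" for y z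
    by (rule in_orbit_iff_orbit_eq[OF \<sigma>_permutation])
  have in_block_iff: "y \<in> D \<longleftrightarrow> y \<in> T - orbit \<sigma> x \<and> orbit \<sigma> y = D" if D: "D \<in> \<D>" for D y
  proof -
    obtain z where "D = orbit \<sigma> z" using D \<C>_orbits by (auto simp: \<D>_def)
    then show ?thesis using D unfolding Diff_iff in_T_iff by (auto simp: \<D>_def in_orbit_iff)
  qed
  have "transversals =
      {ys. length ys = g - 1 \<and> set ys \<subseteq> T - orbit \<sigma> x \<and> distinct (map (orbit \<sigma>) ys)}"
    unfolding transversals_def by (auto simp: in_orbit_iff) (metis image_eqI)
  also have "card \<dots> = (\<Prod>i<g - 1. (card \<D> - i)) * l ^ (g - 1)"
  proof (rule card_lists_distinct_blocks)
    show "finite \<D>" using finite_\<C> by (simp add: \<D>_def)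
    show "card D = l" if "D \<in> \<D>" for D using that Csub by (auto simp: \<D>_def)
    show "orbit \<sigma> y \<in> \<D>" if "y \<in> T - orbit \<sigma> x" for y
      using that unfolding Diff_iff in_T_iff by (auto simp: \<D>_def in_orbit_iff)
  qed (use l_pos in_block_iff in auto)
  also have "card \<D> = g - 1" using xC finite_\<C> by (simp add: \<D>_def)
  finally show ?thesis by (simp only: prod_rev_fact)
qed

lemma card_cyclic_roots: "card (cyclic_roots k T \<sigma> x) = fact (g - 1) * l ^ (g - 1)"
proof -
  have "first_points ` cyclic_roots k T \<sigma> x = transversals"
    using first_points_in_transversals first_points_cycle_of_transversal
      cycle_of_transversal_in_cyclic_roots
    by (auto intro: image_eqI[OF sym])
  then show ?thesis using card_image[OF inj_on_first_points] card_transversals by simp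
qed

lemma sum_sign_cyclic_roots:
  "(\<Sum>\<tau>\<in>cyclic_roots k T \<sigma> x. sign \<tau>) = (-1) ^ (l * g + 1) * fact (g - 1) * int l ^ (g - 1)"
proof -
  have "sign \<tau> = (-1) ^ (l * g + 1)" if "\<tau> \<in> cyclic_roots k T \<sigma> x" for \<tau>
    using sign_single_cycle[of \<tau> T x] finite_T card_T that by (simp add: cyclic_roots_def)
  then show ?thesis by (simp add: card_cyclic_roots)
qed

end

section \<open>The recursion for signed root counts\<close>

definition cycle_type :: "('a \<Rightarrow> 'a) \<Rightarrow> 'a set \<Rightarrow> (nat \<Rightarrow>\<^sub>0 nat)" where
  "cycle_type \<sigma> S = (\<Sum>C\<in>orbit \<sigma> ` S. single (card C) 1)"

lemma lookup_cycle_type: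
  "finite S \<Longrightarrow> lookup (cycle_type \<sigma> S) i = card {C \<in> orbit \<sigma> ` S. card C = i}"
  unfolding cycle_type_def lookup_sum lookup_single when_def
  by (simp add: sum.If_cases Int_def eq_commute)

lemma orbits_perm_restrict_diff:
  assumes fS: "finite S" and \<sigma>: "\<sigma> permutes S" and \<C>: "\<C> \<subseteq> orbit \<sigma> ` S"
  shows "perm_restrict \<sigma> (S - \<Union>\<C>) permutes (S - \<Union>\<C>)"
    and "orbit (perm_restrict \<sigma> (S - \<Union>\<C>)) ` (S - \<Union>\<C>) = orbit \<sigma> ` S - \<C>"
proof -
  have \<sigma>perm: "permutation \<sigma>" using permutes_imp_permutation[OF fS \<sigma>] .
  have in_Union: "y \<in> \<Union>\<C> \<longleftrightarrow> orbit \<sigma> y \<in> \<C>" for y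
    by (rule in_Union_orbits_iff[OF \<sigma>perm \<C>])
  have inv: "\<sigma> ` (S - \<Union>\<C>) \<subseteq> S - \<Union>\<C>"
  proof
    fix z assume "z \<in> \<sigma> ` (S - \<Union>\<C>)"
    then obtain y where y: "y \<in> S" "orbit \<sigma> y \<notin> \<C>" "z = \<sigma> y"
      unfolding in_Union[symmetric] by blast
    have "\<sigma> y \<in> S" using y(1) permutes_in_image[OF \<sigma>] by simp
    moreover have "\<sigma> y \<notin> \<Union>\<C>"
      unfolding in_Union using y(2) permutation_orbit_step[OF \<sigma>perm, of y] by simp
    ultimately show "z \<in> S - \<Union>\<C>" using y(3) by simp
  qed
  show "perm_restrict \<sigma> (S - \<Union>\<C>) permutes (S - \<Union>\<C>)"
    by (rule perm_restrict_permutes[OF \<sigma> _ inv]) (use fS in simp)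
  have "orbit (perm_restrict \<sigma> (S - \<Union>\<C>)) y = orbit \<sigma> y" if "y \<in> S - \<Union>\<C>" for y
    by (rule orbit_cong0[OF that]) (use inv in \<open>auto simp: perm_restrict_def\<close>)
  then have "orbit (perm_restrict \<sigma> (S - \<Union>\<C>)) ` (S - \<Union>\<C>) = orbit \<sigma> ` (S - \<Union>\<C>)"
    by (rule image_cong[OF refl])
  also have "\<dots> = orbit \<sigma> ` S - \<C>"
    using in_Union by blast
  finally show "orbit (perm_restrict \<sigma> (S - \<Union>\<C>)) ` (S - \<Union>\<C>) = orbit \<sigma> ` S - \<C>" .
qed

lemma cycle_type_perm_restrict_diff:
  assumes fS: "finite S" and \<sigma>: "\<sigma> permutes S" and \<C>: "\<C> \<subseteq> {C \<in> orbit \<sigma> ` S. card C = l}"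
  shows "cycle_type (perm_restrict \<sigma> (S - \<Union>\<C>)) (S - \<Union>\<C>) = cycle_type \<sigma> S - single l (card \<C>)"
proof (rule poly_mapping_eqI)
  fix i
  have \<C>': "\<C> \<subseteq> orbit \<sigma> ` S" using \<C> by auto
  have "{C \<in> orbit \<sigma> ` S - \<C>. card C = i} = {C \<in> orbit \<sigma> ` S. card C = i} - {C \<in> \<C>. card C = i}"
    by blast
  moreover have "{C \<in> \<C>. card C = i} = (if i = l then \<C> else {})" using \<C> by auto
  moreover have "finite \<C>" using finite_subset[OF \<C>'] fS by blast
  ultimately show "lookup (cycle_type (perm_restrict \<sigma> (S - \<Union>\<C>)) (S - \<Union>\<C>)) i =
      lookup (cycle_type \<sigma> S - single l (card \<C>)) i"
    using fS \<C>' by (simp add: lookup_cycle_type orbits_perm_restrict_diff(2)[OF fS \<sigma> \<C>']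
        lookup_minus lookup_single card_Diff_subset[OF _ \<C>])
qed

lemma card_subsets_containing:
  assumes "finite A" "a \<in> A" "1 \<le> g"
  shows "card {B. B \<subseteq> A \<and> a \<in> B \<and> card B = g} = (card A - 1) choose (g - 1)"
proof -
  have "{B. B \<subseteq> A \<and> a \<in> B \<and> card B = g} = insert a ` {B. B \<subseteq> A - {a} \<and> card B = g - 1}"
  proof (intro equalityI subsetI)
    fix B assume B: "B \<in> {B. B \<subseteq> A \<and> a \<in> B \<and> card B = g}"
    then have "B = insert a (B - {a})" "card (B - {a}) = g - 1"
      using assms(1) finite_subset by (auto simp: card_Diff_singleton)
    with B show "B \<in> insert a ` {B. B \<subseteq> A - {a} \<and> card B = g - 1}" by blast
  next
    fix B' assume "B' \<in> insert a ` {B. B \<subseteq> A - {a} \<and> card B = g - 1}"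
    then obtain B where B: "B \<subseteq> A - {a}" "card B = g - 1" "B' = insert a B" by blast
    then have "finite B" "a \<notin> B" using assms(1) finite_subset by auto
    with B assms show "B' \<in> {B. B \<subseteq> A \<and> a \<in> B \<and> card B = g}" by auto
  qed
  moreover have "inj_on (insert a) {B. B \<subseteq> A - {a} \<and> card B = g - 1}"
    by (rule inj_onI) blast
  ultimately show ?thesis
    using assms by (simp add: card_image n_subsets)
qed

lemma sum_subsets_containing_by_card:
  fixes f :: "nat \<Rightarrow> 'b::comm_semiring_1"
  assumes "finite A" "a \<in> A" "finite G" "0 \<notin> G"
  shows "(\<Sum>B\<in>{B. B \<subseteq> A \<and> a \<in> B \<and> card B \<in> G}. f (card B)) =
    (\<Sum>g\<in>G. of_nat ((card A - 1) choose (g - 1)) * f g)"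
proof -
  let ?F = "{B. B \<subseteq> A \<and> a \<in> B \<and> card B \<in> G}"
  have "(\<Sum>B\<in>?F. f (card B)) = (\<Sum>g\<in>G. \<Sum>B\<in>{B \<in> ?F. card B = g}. f (card B))"
    by (rule sum.group[symmetric, OF _ assms(3)])
      (use assms(1) in \<open>auto intro: finite_subset[of _ "Pow A"]\<close>)
  also have "\<dots> = (\<Sum>g\<in>G. of_nat ((card A - 1) choose (g - 1)) * f g)"
  proof (intro sum.cong refl)
    fix g assume "g \<in> G"
    then have "1 \<le> g" and "{B \<in> ?F. card B = g} = {B. B \<subseteq> A \<and> a \<in> B \<and> card B = g}"
      using assms(4) by (cases g, auto)
    then show "(\<Sum>B\<in>{B \<in> ?F. card B = g}. f (card B)) = of_nat ((card A - 1) choose (g - 1)) * f g"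
      by (simp add: card_subsets_containing[OF assms(1,2)])
  qed
  finally show ?thesis .
qed

lemma signed_root_count_eq_sum_cycles:
  assumes fS: "finite S" and \<sigma>: "\<sigma> permutes S" and x: "x \<in> S"
  shows "signed_root_count k S \<sigma> = (\<Sum>T\<in>Pow S. if x \<in> T then
    (\<Sum>\<tau>\<in>cyclic_roots k T \<sigma> x. sign \<tau>) * signed_root_count k (S - T) (perm_restrict \<sigma> (S - T))
    else 0)"
proof -
  have "signed_root_count k S \<sigma> =
      (\<Sum>T\<in>Pow S. \<Sum>\<tau>\<in>{\<tau>\<in>kth_roots k S \<sigma>. orbit \<tau> x = T}. sign \<tau>)"
    unfolding signed_root_count_def
    by (rule sum.group[symmetric, OF finite_kth_roots[OF fS]])
      (use fS permutes_orbit_subset[OF _ x] in \<open>auto simp: kth_roots_def\<close>)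
  also have "\<dots> = (\<Sum>T\<in>Pow S. if x \<in> T then
      (\<Sum>\<tau>\<in>cyclic_roots k T \<sigma> x. sign \<tau>) * signed_root_count k (S - T) (perm_restrict \<sigma> (S - T))
      else 0)"
  proof (intro sum.cong refl)
    fix T assume T: "T \<in> Pow S"
    have "x \<in> orbit \<tau> x" if "\<tau> \<in> kth_roots k S \<sigma>" for \<tau>
      using that fS
      by (auto simp: kth_roots_def intro: permutation_self_in_orbit permutes_imp_permutation)
    then have empty: "x \<notin> T \<Longrightarrow> {\<tau>\<in>kth_roots k S \<sigma>. orbit \<tau> x = T} = {}" by blast
    show "(\<Sum>\<tau>\<in>{\<tau>\<in>kth_roots k S \<sigma>. orbit \<tau> x = T}. sign \<tau>) = (if x \<in> T then
      (\<Sum>\<tau>\<in>cyclic_roots k T \<sigma> x. sign \<tau>) * signed_root_count k (S - T) (perm_restrict \<sigma> (S - T))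
      else 0)"
    proof (cases "x \<in> T")
      case True
      then show ?thesis using sum_sign_kth_roots_with_orbit[OF fS \<sigma>, of T x] T by simp
    next
      case False
      show ?thesis unfolding empty[OF False] using False by simp
    qed
  qed
  finally show ?thesis .
qed

lemma inj_on_Union_orbits:
  assumes "permutation \<sigma>"
  shows "inj_on Union {\<C>. \<C> \<subseteq> orbit \<sigma> ` S}"
proof -
  have "\<C>1 \<subseteq> \<C>2"
    if \<C>1: "\<C>1 \<subseteq> orbit \<sigma> ` S" and \<C>2: "\<C>2 \<subseteq> orbit \<sigma> ` S" and eq: "\<Union>\<C>1 = \<Union>\<C>2"
    for \<C>1 \<C>2
  proof
    fix C assume "C \<in> \<C>1"
    then obtain z where z: "C = orbit \<sigma> z" using \<C>1 by auto
    then have "orbit \<sigma> z \<in> \<C>1" using \<open>C \<in> \<C>1\<close> by simp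
    then have "z \<in> \<Union>\<C>2" unfolding eq[symmetric] in_Union_orbits_iff[OF assms \<C>1] .
    then show "C \<in> \<C>2" unfolding z in_Union_orbits_iff[OF assms \<C>2] .
  qed
  then show ?thesis by (intro inj_onI subset_antisym) auto
qed

text \<open>Group the roots \<open>\<tau>\<close> by the cycle of \<open>\<tau>\<close> through \<open>x\<close>: by \<open>cyclic_root_orbits\<close> it
  is the union of a family of cycles of \<open>\<sigma>\<close>, all as long as the cycle of \<open>x\<close>.\<close>

lemma signed_root_count_eq_sum_families:
  assumes fS: "finite S" and \<sigma>: "\<sigma> permutes S" and x: "x \<in> S"
  defines "l \<equiv> card (orbit \<sigma> x)"
  shows "signed_root_count k S \<sigma> =
    (\<Sum>\<C>\<in>{\<C>. \<C> \<subseteq> {C \<in> orbit \<sigma> ` S. card C = l} \<and> orbit \<sigma> x \<in> \<C> \<and> card \<C> \<in> Gk k l}.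
      (\<Sum>\<tau>\<in>cyclic_roots k (\<Union>\<C>) \<sigma> x. sign \<tau>) *
      signed_root_count k (S - \<Union>\<C>) (perm_restrict \<sigma> (S - \<Union>\<C>)))"
    (is "_ = (\<Sum>\<C>\<in>?\<F>. ?f (\<Union>\<C>))")
proof -
  have \<sigma>perm: "permutation \<sigma>" using permutes_imp_permutation[OF fS \<sigma>] .
  have "signed_root_count k S \<sigma> = (\<Sum>T\<in>Pow S. if x \<in> T then ?f T else 0)"
    by (rule signed_root_count_eq_sum_cycles[OF fS \<sigma> x])
  also have "\<dots> = (\<Sum>T\<in>Union ` ?\<F>. if x \<in> T then ?f T else 0)"
  proof (rule sum.mono_neutral_right)
    show "Union ` ?\<F> \<subseteq> Pow S"
      using permutes_orbit_subset[OF \<sigma>] by fastforce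
    show "\<forall>T\<in>Pow S - Union ` ?\<F>. (if x \<in> T then ?f T else 0) = 0"
    proof
      fix T assume T: "T \<in> Pow S - Union ` ?\<F>"
      have "cyclic_roots k T \<sigma> x = {}" if xT: "x \<in> T"
      proof (rule ccontr)
        assume "cyclic_roots k T \<sigma> x \<noteq> {}"
        then obtain \<tau> where \<tau>: "\<tau> \<in> cyclic_roots k T \<sigma> x" by auto
        have "T \<subseteq> S" using T by simp
        obtain \<C> where "\<C> \<subseteq> {C \<in> orbit \<sigma> ` S. card C = l}" "orbit \<sigma> x \<in> \<C>"
            "card \<C> \<in> Gk k l" "T = \<Union>\<C>"
          using cyclic_root_orbits[OF fS \<sigma> \<open>T \<subseteq> S\<close> xT \<tau>] unfolding l_def .
        then show False using T by auto
      qed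
      then show "(if x \<in> T then ?f T else 0) = 0" by auto
    qed
  qed (use fS in simp)
  also have "\<dots> = (\<Sum>\<C>\<in>?\<F>. if x \<in> \<Union>\<C> then ?f (\<Union>\<C>) else 0)"
    by (rule sum.reindex[unfolded comp_def], rule inj_on_subset[OF inj_on_Union_orbits[OF \<sigma>perm]])
      auto
  also have "\<dots> = (\<Sum>\<C>\<in>?\<F>. ?f (\<Union>\<C>))"
    using permutation_self_in_orbit[OF \<sigma>perm, of x] by (intro sum.cong refl) auto
  finally show ?thesis .
qed

lemma signed_root_count_empty: "signed_root_count k {} (id :: 'a \<Rightarrow> 'a) = 1"
proof -
  have "kth_roots k {} id = {id :: 'a \<Rightarrow> 'a}" by (auto simp: kth_roots_def)
  then show ?thesis unfolding signed_root_count_def by simp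
qed

theorem signed_root_count_eq_scaled_exp_coeff:
  assumes k: "0 < k" and "finite S" "\<sigma> permutes S" "card S \<le> N"
  shows "of_int (signed_root_count k S \<sigma>) = scaled_exp_coeff k N (cycle_type \<sigma> S)"
  using assms(2-)
proof (induction "card S" arbitrary: S \<sigma> rule: less_induct)
  case less
  note fS = less.prems(1) and \<sigma> = less.prems(2)
  show ?case
  proof (cases "S = {}")
    case True
    then show ?thesis
      using \<sigma> signed_root_count_empty by (simp add: cycle_type_def scaled_exp_coeff_0[OF k])
  next
    case False
    then obtain x where x: "x \<in> S" by blast
    have \<sigma>perm: "permutation \<sigma>" using permutes_imp_permutation[OF fS \<sigma>] .
    define l where "l = card (orbit \<sigma> x)"
    define m where "m = cycle_type \<sigma> S"
    define \<O> where "\<O> = {C \<in> orbit \<sigma> ` S. card C = l}"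
    define V where "V g = (-1) ^ (l * g + 1) * fact (g - 1) * real l ^ (g - 1) *
      scaled_exp_coeff k N (m - single l g)" for g
    have fin\<O>: "finite \<O>" using fS by (simp add: \<O>_def)
    have x\<O>: "orbit \<sigma> x \<in> \<O>" using x by (simp add: \<O>_def l_def)
    have m_l: "lookup m l = card \<O>" using lookup_cycle_type[OF fS] by (simp add: m_def \<O>_def)
    have \<F>_eq: "{\<C>. \<C> \<subseteq> {C \<in> orbit \<sigma> ` S. card C = l} \<and> orbit \<sigma> x \<in> \<C> \<and> card \<C> \<in> Gk k l} =
        {\<C>. \<C> \<subseteq> \<O> \<and> orbit \<sigma> x \<in> \<C> \<and> card \<C> \<in> Gk k l}"
      by (simp add: \<O>_def)
    have "of_int (signed_root_count k S \<sigma>) =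
        (\<Sum>\<C>\<in>{\<C>. \<C> \<subseteq> \<O> \<and> orbit \<sigma> x \<in> \<C> \<and> card \<C> \<in> Gk k l}. V (card \<C>))"
      unfolding signed_root_count_eq_sum_families[OF fS \<sigma> x, of k, folded l_def, unfolded \<F>_eq]
        of_int_sum
    proof (intro sum.cong refl)
      fix \<C> assume "\<C> \<in> {\<C>. \<C> \<subseteq> \<O> \<and> orbit \<sigma> x \<in> \<C> \<and> card \<C> \<in> Gk k l}"
      then interpret cycle_family k S \<sigma> x l \<C>
        using k fS \<sigma> by unfold_locales (auto simp: \<O>_def)
      have "S - T \<subset> S" using x_in_T T_subset by blast
      have "of_int (signed_root_count k (S - T) (perm_restrict \<sigma> (S - T))) =
          scaled_exp_coeff k N (cycle_type (perm_restrict \<sigma> (S - T)) (S - T))"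
        by (rule less.hyps[OF psubset_card_mono[OF fS \<open>S - T \<subset> S\<close>]])
          (use fS less.prems(3) orbits_perm_restrict_diff(1)[OF fS \<sigma> \<C>_orbits]
            card_mono[OF fS, of "S - T"] in auto)
      also have "\<dots> = scaled_exp_coeff k N (m - single l g)"
        using cycle_type_perm_restrict_diff[OF fS \<sigma> Csub] by (simp add: m_def)
      finally show "of_int ((\<Sum>\<tau>\<in>cyclic_roots k T \<sigma> x. sign \<tau>) *
          signed_root_count k (S - T) (perm_restrict \<sigma> (S - T))) = V g"
        by (simp add: sum_sign_cyclic_roots V_def)
    qed
    also have "\<dots> = (\<Sum>g\<in>Gk k l. real ((card \<O> - 1) choose (g - 1)) * V g)"
      using Gk_pos[OF k] by (intro sum_subsets_containing_by_card[OF fin\<O> x\<O> finite_Gk[OF k]]) blast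
    also have "\<dots> = scaled_exp_coeff k N m"
    proof -
      have "0 < l" using card_orbit_pos[OF \<sigma>perm] by (simp add: l_def)
      moreover have "l \<le> N"
        using card_mono[OF fS permutes_orbit_subset[OF \<sigma> x]] less.prems(3) by (simp add: l_def)
      moreover have "0 < lookup m l" using m_l fin\<O> x\<O> card_gt_0_iff by auto
      ultimately show ?thesis
        using scaled_exp_coeff_rec[OF k, of l N m] by (simp add: m_l V_def mult.assoc)
    qed
    finally show ?thesis by (simp add: m_def)
  qed
qed

lemma cycle_type_eq_sum_cycle_count:
  assumes fS: "finite S" and \<sigma>: "\<sigma> permutes S"
  shows "cycle_type \<sigma> S = (\<Sum>i\<in>{1..card S}. single i (cycle_count \<sigma> S i))"
proof (rule poly_mapping_eqI)
  fix i
  have \<sigma>perm: "permutation \<sigma>" using permutes_imp_permutation[OF fS \<sigma>] .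
  have count: "card {C \<in> orbit \<sigma> ` S. card C = i} = cycle_count \<sigma> S i"
    unfolding cycle_count_def by (rule arg_cong[where f = card]) blast
  have "card C \<in> {1..card S}" if C: "C \<in> orbit \<sigma> ` S" for C
  proof -
    obtain y where y: "y \<in> S" "C = orbit \<sigma> y" using C by blast
    then have "C \<subseteq> S" using permutes_orbit_subset[OF \<sigma>] by simp
    then show ?thesis using card_mono[OF fS] card_orbit_pos[OF \<sigma>perm, of y] y by auto
  qed
  then have "i \<notin> {1..card S} \<Longrightarrow> cycle_count \<sigma> S i = 0"
    unfolding count[symmetric] by (metis (mono_tags, lifting) card.empty empty_Collect_eq)
  then show "lookup (cycle_type \<sigma> S) i = lookup (\<Sum>i\<in>{1..card S}. single i (cycle_count \<sigma> S i)) i"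
    by (cases "i \<in> {1..card S}")
      (auto simp: lookup_cycle_type[OF fS] count lookup_sum lookup_single when_def)
qed

lemma monom_fact_sum_single:
  assumes "finite A"
  shows "monom_fact (\<Sum>i\<in>A. single i (f i)) = (\<Prod>i\<in>A. fact (f i))"
proof -
  have lookup_sum_single: "lookup (\<Sum>i\<in>A. single i (f i)) j = (if j \<in> A then f j else 0)" for j
    using assms by (simp add: lookup_sum lookup_single when_def)
  then have "keys (\<Sum>i\<in>A. single i (f i)) \<subseteq> A" by (auto simp: in_keys_iff split: if_splits)
  then show ?thesis using assms by (simp add: monom_fact_superset lookup_sum_single)
qed

lemma signed_root_count_eq_card_diff:
  assumes "finite S"
  shows "signed_root_count k S \<sigma> = int (card {\<tau>. \<tau> permutes S \<and> evenperm \<tau> \<and> \<tau> ^^ k = \<sigma>})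
    - int (card {\<tau>. \<tau> permutes S \<and> \<not> evenperm \<tau> \<and> \<tau> ^^ k = \<sigma>})"
proof -
  have "signed_root_count k S \<sigma> = (\<Sum>\<tau>\<in>kth_roots k S \<sigma> \<inter> {\<tau>. evenperm \<tau>}. 1) +
      (\<Sum>\<tau>\<in>kth_roots k S \<sigma> \<inter> - {\<tau>. evenperm \<tau>}. - 1)"
    unfolding signed_root_count_def sign_def by (rule sum.If_cases[OF finite_kth_roots[OF assms]])
  moreover have "kth_roots k S \<sigma> \<inter> {\<tau>. evenperm \<tau>} = {\<tau>. \<tau> permutes S \<and> evenperm \<tau> \<and> \<tau> ^^ k = \<sigma>}"
    and "kth_roots k S \<sigma> \<inter> - {\<tau>. evenperm \<tau>} = {\<tau>. \<tau> permutes S \<and> \<not> evenperm \<tau> \<and> \<tau> ^^ k = \<sigma>}"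
    by (auto simp: kth_roots_def)
  ultimately show ?thesis by simp
qed

theorem lemma3:
  fixes n k N :: nat and c :: "nat \<Rightarrow> nat" and \<sigma> :: "nat \<Rightarrow> nat"
  assumes "n > 0" and "k > 0"
    and "n = (\<Sum>i\<in>{1..n}. i * c i)"
    and "\<sigma> permutes {1..n}"
    and "\<forall>i\<in>{1..n}. cycle_count \<sigma> {1..n} i = c i"
    and "N \<ge> n"
  shows "exp_coeff (genF k N) (\<Sum>i\<in>{1..n}. Poly_Mapping.single i (c i))
           * (\<Prod>i\<in>{1..n}. fact (c i))
         = real (card {\<tau>. \<tau> permutes {1..n} \<and> evenperm \<tau> \<and> \<tau> ^^ k = \<sigma>})
           - real (card {\<tau>. \<tau> permutes {1..n} \<and> \<not> evenperm \<tau> \<and> \<tau> ^^ k = \<sigma>})"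
proof -
  have "(\<Sum>i\<in>{1..n}. single i (c i)) = cycle_type \<sigma> {1..n}"
    using cycle_type_eq_sum_cycle_count[OF _ assms(4)] assms(5) by simp
  then have "exp_coeff (genF k N) (\<Sum>i\<in>{1..n}. single i (c i)) * (\<Prod>i\<in>{1..n}. fact (c i)) =
      scaled_exp_coeff k N (cycle_type \<sigma> {1..n})"
    by (simp add: scaled_exp_coeff_def flip: monom_fact_sum_single)
  also have "\<dots> = of_int (signed_root_count k {1..n} \<sigma>)"
    using signed_root_count_eq_scaled_exp_coeff[OF assms(2) _ assms(4)] assms(6) by simp
  finally show ?thesis by (simp add: signed_root_count_eq_card_diff)
qed

end
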